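(* Let $\varphi:\Lambda\to\Gamma$ be a regular covering map of finite simplicial graphs. For every vertex $v$ of $\Gamma$ and every connected component $B$ of $\Gamma\setminus\mathrm{st}(v)$, the partial conjugation $P^v_{\bar B}$ is liftable.
   Context: Graphs are finite simplicial graphs; subgraphs are induced. $A_\Gamma$ is the right-angled Artin group with generators $V\Gamma$ and relations $[u,w]=1$ for edges. $\mathrm{lk}(v)$ is induced by the neighbours of $v$, $\mathrm{st}(v)$ by $\mathrm{lk}(v)\cup\{v\}$. A covering map $\varphi:\Lambda\to\Gamma$ is a surjective simplicial map mapping the neighbours of each vertex $u$ bijectively onto the neighbours of $\varphi(u)$; regular means the group of graph automorphisms $\mu$ of $\Lambda$ with $\varphi\mu=\varphi$ acts transitively on each fiber. $\phi:A_\Lambda\to A_\Gamma$ is induced by $\varphi$; $f\in\mathrm{Aut}(A_\Gamma)$ is liftable if there is $F\in\mathrm{Aut}(A_\Lambda)$ with $f\circ\phi=\phi\circ F$. For a union $C$ of components of $\Gamma\setminus\mathrm{st}(v)$, $P^v_C$ sends each vertex $w$ of $C$ to $vwv^{-1}$ and fixes other vertices. For a vertex $u$ of $\Lambda$ and a connected subgraph $A$ of $\Lambda$ disjoint from $\mathrm{st}(u)$, $C(u,A)$ is the component of $\Lambda\setminus\mathrm{st}(u)$ containing $A$. For a component $B$ of $\Gamma\setminus\mathrm{st}(v)$, pick a component $\tilde B$ of $\varphi^{-1}(B)$ and set $\bar B=\varphi\big(\bigcap_{u\in\varphi^{-1}(v)}C(u,\tilde B)\big)$; this is independent of the choice of $\tilde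 B$ and is a union of components of $\Gamma\setminus\mathrm{st}(v)$ containing $B$. *)

theory Defs
  imports "HOL-Algebra.Group"
begin

definition simple_graph :: "'v set \<Rightarrow> ('v \<Rightarrow> 'v \<Rightarrow> bool) \<Rightarrow> bool" where
  "simple_graph V E \<longleftrightarrow> finite V \<and> (\<forall>x y. E x y \<longrightarrow> x \<in> V \<and> y \<in> V)
     \<and> (\<forall>x y. E x y \<longrightarrow> E y x) \<and> (\<forall>x. \<not> E x x)"

definition lk :: "'v set \<Rightarrow> ('v \<Rightarrow> 'v \<Rightarrow> bool) \<Rightarrow> 'v \<Rightarrow> 'v set" where
  "lk V E v = {w \<in> V. E v w}"

definition st :: "'v set \<Rightarrow> ('v \<Rightarrow> 'v \<Rightarrow> bool) \<Rightarrow> 'v \<Rightarrow> 'v set" where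
  "st V E v = insert v (lk V E v)"

definition reach_in :: "'v set \<Rightarrow> ('v \<Rightarrow> 'v \<Rightarrow> bool) \<Rightarrow> 'v \<Rightarrow> 'v \<Rightarrow> bool" where
  "reach_in S E = (\<lambda>a b. a \<in> S \<and> b \<in> S \<and> E a b)\<^sup>*\<^sup>*"

definition component :: "'v set \<Rightarrow> ('v \<Rightarrow> 'v \<Rightarrow> bool) \<Rightarrow> 'v set \<Rightarrow> bool" where
  "component S E K \<longleftrightarrow> (\<exists>x\<in>S. K = {y. reach_in S E x y})"

definition covering_map :: "'a set \<Rightarrow> ('a \<Rightarrow> 'a \<Rightarrow> bool) \<Rightarrow> 'b set \<Rightarrow> ('b \<Rightarrow> 'b \<Rightarrow> bool)
     \<Rightarrow> ('a \<Rightarrow> 'b) \<Rightarrow> bool" where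
  "covering_map VL EL VG EG \<phi> \<longleftrightarrow> \<phi> ` VL = VG
     \<and> (\<forall>x y. EL x y \<longrightarrow> EG (\<phi> x) (\<phi> y))
     \<and> (\<forall>u\<in>VL. bij_betw \<phi> (lk VL EL u) (lk VG EG (\<phi> u)))"

definition graph_aut :: "'a set \<Rightarrow> ('a \<Rightarrow> 'a \<Rightarrow> bool) \<Rightarrow> ('a \<Rightarrow> 'a) \<Rightarrow> bool" where
  "graph_aut V E \<mu> \<longleftrightarrow> bij_betw \<mu> V V \<and> (\<forall>x\<in>V. \<forall>y\<in>V. E x y \<longleftrightarrow> E (\<mu> x) (\<mu> y))"

definition deck :: "'a set \<Rightarrow> ('a \<Rightarrow> 'a \<Rightarrow> bool) \<Rightarrow> ('a \<Rightarrow> 'b) \<Rightarrow> ('a \<Rightarrow> 'a) set" where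
  "deck VL EL \<phi> = {\<mu>. graph_aut VL EL \<mu> \<and> (\<forall>x\<in>VL. \<phi> (\<mu> x) = \<phi> x)}"

definition regular_covering :: "'a set \<Rightarrow> ('a \<Rightarrow> 'a \<Rightarrow> bool) \<Rightarrow> 'b set \<Rightarrow> ('b \<Rightarrow> 'b \<Rightarrow> bool)
     \<Rightarrow> ('a \<Rightarrow> 'b) \<Rightarrow> bool" where
  "regular_covering VL EL VG EG \<phi> \<longleftrightarrow> covering_map VL EL VG EG \<phi>
     \<and> (\<forall>u\<in>VL. \<forall>u'\<in>VL. \<phi> u = \<phi> u' \<longrightarrow> (\<exists>\<mu>\<in>deck VL EL \<phi>. \<mu> u = u'))"

text \<open>Words are lists of letters (x, True) = x and (x, False) = x^-1.\<close>

inductive raag_step :: "'v set \<Rightarrow> ('v \<Rightarrow> 'v \<Rightarrow> bool) \<Rightarrow> ('v \<times> bool) list \<Rightarrow> ('v \<times> bool) list \<Rightarrow> bool"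
  for V E where
  cancel: "\<lbrakk>x \<in> V; set xs \<subseteq> V \<times> UNIV; set ys \<subseteq> V \<times> UNIV\<rbrakk>
     \<Longrightarrow> raag_step V E (xs @ [(x, b), (x, \<not> b)] @ ys) (xs @ ys)"
| commute: "\<lbrakk>x \<in> V; y \<in> V; E x y; set xs \<subseteq> V \<times> UNIV; set ys \<subseteq> V \<times> UNIV\<rbrakk>
     \<Longrightarrow> raag_step V E (xs @ [(x, b), (y, c)] @ ys) (xs @ [(y, c), (x, b)] @ ys)"

definition raag_equiv :: "'v set \<Rightarrow> ('v \<Rightarrow> 'v \<Rightarrow> bool) \<Rightarrow> ('v \<times> bool) list \<Rightarrow> ('v \<times> bool) list \<Rightarrow> bool" where
  "raag_equiv V E = (symclp (raag_step V E))\<^sup>*\<^sup>*"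

definition raag_class :: "'v set \<Rightarrow> ('v \<Rightarrow> 'v \<Rightarrow> bool) \<Rightarrow> ('v \<times> bool) list \<Rightarrow> ('v \<times> bool) list set" where
  "raag_class V E w = {w'. raag_equiv V E w w'}"

definition raag :: "'v set \<Rightarrow> ('v \<Rightarrow> 'v \<Rightarrow> bool) \<Rightarrow> ('v \<times> bool) list set monoid" where
  "raag V E = \<lparr>carrier = raag_class V E ` lists (V \<times> UNIV),
     mult = (\<lambda>A B. raag_class V E ((SOME a. a \<in> A) @ (SOME b. b \<in> B))),
     one = raag_class V E []\<rparr>"

definition raag_induced :: "'b set \<Rightarrow> ('b \<Rightarrow> 'b \<Rightarrow> bool) \<Rightarrow> ('a \<Rightarrow> 'b)
     \<Rightarrow> ('a \<times> bool) list set \<Rightarrow> ('b \<times> bool) list set" where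
  "raag_induced VG EG \<phi> A = raag_class VG EG (map (\<lambda>(x, b). (\<phi> x, b)) (SOME a. a \<in> A))"

definition pconj :: "'v set \<Rightarrow> ('v \<Rightarrow> 'v \<Rightarrow> bool) \<Rightarrow> 'v \<Rightarrow> 'v set
     \<Rightarrow> ('v \<times> bool) list set \<Rightarrow> ('v \<times> bool) list set" where
  "pconj V E v C A = raag_class V E (concat (map (\<lambda>(x, b).
      if x \<in> C then [(v, True), (x, b), (v, False)] else [(x, b)]) (SOME a. a \<in> A)))"

definition liftable :: "'a set \<Rightarrow> ('a \<Rightarrow> 'a \<Rightarrow> bool) \<Rightarrow> 'b set \<Rightarrow> ('b \<Rightarrow> 'b \<Rightarrow> bool)
     \<Rightarrow> ('a \<Rightarrow> 'b) \<Rightarrow> (('b \<times> bool) list set \<Rightarrow> ('b \<times> bool) list set) \<Rightarrow> bool" where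
  "liftable VL EL VG EG \<phi> f \<longleftrightarrow> f \<in> iso (raag VG EG) (raag VG EG) \<and>
     (\<exists>F. F \<in> iso (raag VL EL) (raag VL EL) \<and>
        (\<forall>g \<in> carrier (raag VL EL). f (raag_induced VG EG \<phi> g) = raag_induced VG EG \<phi> (F g)))"

definition comp_containing :: "'a set \<Rightarrow> ('a \<Rightarrow> 'a \<Rightarrow> bool) \<Rightarrow> 'a \<Rightarrow> 'a set \<Rightarrow> 'a set" where
  "comp_containing VL EL u A = (THE K. component (VL - st VL EL u) EL K \<and> A \<subseteq> K)"

definition bar_set :: "'a set \<Rightarrow> ('a \<Rightarrow> 'a \<Rightarrow> bool) \<Rightarrow> ('a \<Rightarrow> 'b) \<Rightarrow> 'b \<Rightarrow> 'a set \<Rightarrow> 'b set" where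
  "bar_set VL EL \<phi> v Bt = \<phi> ` (\<Inter>u \<in> {u \<in> VL. \<phi> u = v}. comp_containing VL EL u Bt)"

end

(*
  Write C(u, x) for the component of x in Lambda - st(u), and for a vertex x of Lambda lying
  over Gamma - st(v) let I(x) be the intersection of the C(u, x) over all lifts u of v; then
  B-bar is the image of I(b) for any vertex b of the chosen lift of B. Since the covering is a
  local isomorphism, the stars of distinct lifts of v are disjoint, and C(u, x) can only be left
  through st(u). Call a lift u near x if u lies in C(u', x) for every other lift u'. Then every
  vertex w over Gamma - st(v) in the component of x but outside I(x) lies in all but one of the
  sets C(u, x) with u near x. Consequently the partial conjugations by the near lifts
  u on C(u, x), together with 1 - #(near lifts) partial conjugations of the whole component by a
  lift of v, conjugate every vertex of I(x) exactly once and every other vertex over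
  Gamma - st(v) not at all. By regularity the preimage of B-bar is a disjoint union of such sets
  I(x), and the product of all these automorphisms lifts P^v_{B-bar}: under phi both send a
  generator to its conjugate by the same power of v, except on generators over st(v), which
  commute with v anyway.
*)

theory Submission
  imports Defs
begin

section \<open>Words in right-angled Artin groups\<close>

abbreviation words :: "'v set \<Rightarrow> ('v \<times> bool) list set" where
  "words V \<equiv> lists (V \<times> (UNIV :: bool set))"

lemma raag_equiv_eq_equivclp: "raag_equiv V E = equivclp (raag_step V E)"
  by (simp add: raag_equiv_def equivclp_def)

lemma raag_equiv_refl [simp]: "raag_equiv V E a a"
  by (simp add: raag_equiv_eq_equivclp)

lemma raag_equiv_sym [sym]: "raag_equiv V E a b \<Longrightarrow> raag_equiv V E b a"
  by (simp add: raag_equiv_eq_equivclp equivclp_sym)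

lemma raag_equiv_trans [trans]:
  "raag_equiv V E a b \<Longrightarrow> raag_equiv V E b c \<Longrightarrow> raag_equiv V E a c"
  unfolding raag_equiv_eq_equivclp by (rule equivclp_trans)

lemma raag_equiv_if_step: "raag_step V E a b \<Longrightarrow> raag_equiv V E a b"
  by (simp add: raag_equiv_eq_equivclp r_into_equivclp)

lemma raag_step_words: "raag_step V E a b \<Longrightarrow> a \<in> words V \<and> b \<in> words V"
  by (induction rule: raag_step.induct) auto

lemma raag_equiv_words: "raag_equiv V E a b \<Longrightarrow> a \<in> words V \<Longrightarrow> b \<in> words V"
  unfolding raag_equiv_eq_equivclp
  by (induction rule: equivclp_induct) (auto dest: raag_step_words)

lemma raag_step_context:
  "raag_step V E a b \<Longrightarrow> xs \<in> words V \<Longrightarrow> ys \<in> words V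
    \<Longrightarrow> raag_step V E (xs @ a @ ys) (xs @ b @ ys)"
proof (induction rule: raag_step.induct)
  case (cancel x as bs b)
  have "raag_step V E ((xs @ as) @ [(x, b), (x, \<not> b)] @ (bs @ ys)) ((xs @ as) @ (bs @ ys))"
    by (rule raag_step.cancel) (use cancel in auto)
  then show ?case by simp
next
  case (commute x y as bs b c)
  have "raag_step V E ((xs @ as) @ [(x, b), (y, c)] @ (bs @ ys))
      ((xs @ as) @ [(y, c), (x, b)] @ (bs @ ys))"
    by (rule raag_step.commute) (use commute in auto)
  then show ?case by simp
qed

lemma raag_equiv_context:
  assumes "raag_equiv V E a b" "xs \<in> words V" "ys \<in> words V"
  shows "raag_equiv V E (xs @ a @ ys) (xs @ b @ ys)"
  using assms(1) unfolding raag_equiv_eq_equivclp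
proof (induction rule: equivclp_induct)
  case (step y z)
  then show ?case
    using raag_step_context[OF _ assms(2,3)] by (metis equivclp_into_equivclp)
qed simp

lemma raag_equiv_append:
  assumes "raag_equiv V E a a'" "raag_equiv V E b b'" "a \<in> words V" "b \<in> words V"
  shows "raag_equiv V E (a @ b) (a' @ b')"
proof -
  have "a' \<in> words V" using raag_equiv_words assms by blast
  then have "raag_equiv V E (a' @ b @ []) (a' @ b' @ [])"
    using assms by (intro raag_equiv_context) auto
  moreover have "raag_equiv V E ([] @ a @ b) ([] @ a' @ b)"
    using assms by (intro raag_equiv_context) auto
  ultimately show ?thesis using raag_equiv_trans by fastforce
qed

lemma raag_equiv_cancel:
  assumes "x \<in> V" "xs \<in> words V" "ys \<in> words V"
  shows "raag_equiv V E (xs @ (x, b) # (x, \<not> b) # ys) (xs @ ys)"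
  using raag_equiv_if_step[OF raag_step.cancel[of x V xs ys E b]] assms by auto

lemma raag_equiv_commute:
  assumes "x \<in> V" "y \<in> V" "E x y" "xs \<in> words V" "ys \<in> words V"
  shows "raag_equiv V E (xs @ (x, b) # (y, c) # ys) (xs @ (y, c) # (x, b) # ys)"
  using raag_equiv_if_step[OF raag_step.commute[of x V y E xs ys b c]] assms by auto

definition word_inv :: "('v \<times> bool) list \<Rightarrow> ('v \<times> bool) list" where
  "word_inv w = rev (map (\<lambda>(x, b). (x, \<not> b)) w)"

lemma word_inv_Nil [simp]: "word_inv [] = []"
  and word_inv_Cons [simp]: "word_inv (a # w) = word_inv w @ [(fst a, \<not> snd a)]"
  and word_inv_append [simp]: "word_inv (w @ w') = word_inv w' @ word_inv w"
  by (auto simp: word_inv_def split: prod.splits)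

lemma word_inv_word_inv [simp]: "word_inv (word_inv w) = w"
  by (induction w) auto

lemma set_word_inv [simp]: "set (word_inv w) = (\<lambda>(x, b). (x, \<not> b)) ` set w"
  by (auto simp: word_inv_def)

lemma word_inv_in_words_iff [simp]: "word_inv w \<in> words V \<longleftrightarrow> w \<in> words V"
  by (induction w) auto

lemma raag_equiv_append_word_inv: "w \<in> words V \<Longrightarrow> raag_equiv V E (w @ word_inv w) []"
proof (induction w)
  case (Cons a w)
  obtain x b where a: "a = (x, b)" by force
  have "raag_equiv V E ([(x, b)] @ (w @ word_inv w) @ [(x, \<not> b)]) ([(x, b)] @ [] @ [(x, \<not> b)])"
    using Cons a by (intro raag_equiv_context) auto
  also have "raag_equiv V E \<dots> ([] @ [])"
    using raag_equiv_cancel[of x V "[]" "[]" E b] Cons a by simp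
  finally show ?case using a by simp
qed simp

lemma raag_equiv_word_inv_append: "w \<in> words V \<Longrightarrow> raag_equiv V E (word_inv w @ w) []"
  using raag_equiv_append_word_inv[of "word_inv w" V E] by simp

lemma raag_step_word_inv: "raag_step V E a b \<Longrightarrow> raag_equiv V E (word_inv a) (word_inv b)"
proof (induction rule: raag_step.induct)
  case (cancel x xs ys b)
  have "raag_step V E (word_inv ys @ [(x, b), (x, \<not> b)] @ word_inv xs) (word_inv ys @ word_inv xs)"
    by (rule raag_step.cancel) (use cancel in auto)
  then show ?case by (simp add: raag_equiv_if_step)
next
  case (commute x y xs ys b c)
  have "raag_step V E (word_inv ys @ [(x, \<not> b), (y, \<not> c)] @ word_inv xs)
      (word_inv ys @ [(y, \<not> c), (x, \<not> b)] @ word_inv xs)"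
    by (rule raag_step.commute) (use commute in auto)
  from raag_equiv_sym[OF raag_equiv_if_step[OF this]] show ?case by simp
qed

lemma raag_equiv_word_inv: "raag_equiv V E a b \<Longrightarrow> raag_equiv V E (word_inv a) (word_inv b)"
  unfolding raag_equiv_eq_equivclp
proof (induction rule: equivclp_induct)
  case (step y z)
  then have "raag_equiv V E (word_inv y) (word_inv z)"
    using raag_step_word_inv raag_equiv_sym by blast
  with step(3) show ?case
    unfolding raag_equiv_eq_equivclp by (rule equivclp_trans)
qed simp

lemma raag_equiv_commute_word_inv:
  assumes "p \<in> words V" "q \<in> words V" "raag_equiv V E (p @ q) (q @ p)"
  shows "raag_equiv V E (word_inv p @ q) (q @ word_inv p)"
proof -
  have "raag_equiv V E ((word_inv p @ q) @ (p @ word_inv p) @ []) ((word_inv p @ q) @ [] @ [])"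
    using assms by (intro raag_equiv_context raag_equiv_append_word_inv) auto
  then have "raag_equiv V E ((word_inv p @ q) @ [] @ []) ((word_inv p @ q) @ (p @ word_inv p) @ [])"
    by (rule raag_equiv_sym)
  also have "\<dots> = word_inv p @ (q @ p) @ word_inv p" by simp
  also have "raag_equiv V E \<dots> (word_inv p @ (p @ q) @ word_inv p)"
    using assms raag_equiv_sym[OF assms(3)] by (intro raag_equiv_context) auto
  also have "\<dots> = [] @ (word_inv p @ p) @ (q @ word_inv p)" by simp
  also have "raag_equiv V E \<dots> ([] @ [] @ (q @ word_inv p))"
    using assms by (intro raag_equiv_context raag_equiv_word_inv_append) auto
  finally show ?thesis by simp
qed

section \<open>Homomorphisms defined by substituting words for generators\<close>

fun letter_subst :: "('a \<Rightarrow> ('b \<times> bool) list) \<Rightarrow> 'a \<times> bool \<Rightarrow> ('b \<times> bool) list" where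
  "letter_subst \<sigma> (x, b) = (if b then \<sigma> x else word_inv (\<sigma> x))"

definition word_subst :: "('a \<Rightarrow> ('b \<times> bool) list) \<Rightarrow> ('a \<times> bool) list \<Rightarrow> ('b \<times> bool) list" where
  "word_subst \<sigma> w = concat (map (letter_subst \<sigma>) w)"

lemma word_subst_Nil [simp]: "word_subst \<sigma> [] = []"
  and word_subst_Cons [simp]: "word_subst \<sigma> (a # w) = letter_subst \<sigma> a @ word_subst \<sigma> w"
  and word_subst_append [simp]: "word_subst \<sigma> (w @ w') = word_subst \<sigma> w @ word_subst \<sigma> w'"
  by (auto simp: word_subst_def)

lemma letter_subst_Not: "letter_subst \<sigma> (x, \<not> b) = word_inv (letter_subst \<sigma> (x, b))"
  by auto

lemma word_subst_word_inv: "word_subst \<sigma> (word_inv w) = word_inv (word_subst \<sigma> w)"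
  by (induction w) (auto simp: letter_subst_Not simp del: letter_subst.simps)

lemma word_subst_word_subst: "word_subst \<tau> (word_subst \<sigma> w) = word_subst (\<lambda>x. word_subst \<tau> (\<sigma> x)) w"
  by (induction w) (auto simp: word_subst_word_inv)

lemma word_subst_letter [simp]: "word_subst (\<lambda>x. [(x, True)]) w = w"
  by (induction w) auto

lemma word_subst_words:
  assumes "\<And>x. x \<in> V1 \<Longrightarrow> \<sigma> x \<in> words V2"
  shows "w \<in> words V1 \<Longrightarrow> word_subst \<sigma> w \<in> words V2"
proof (induction w)
  case (Cons a w)
  then show ?case using assms word_inv_in_words_iff by (cases a) auto
qed simp

definition commuting_subst :: "'a set \<Rightarrow> ('a \<Rightarrow> 'a \<Rightarrow> bool) \<Rightarrow> 'b set \<Rightarrow> ('b \<Rightarrow> 'b \<Rightarrow> bool)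
    \<Rightarrow> ('a \<Rightarrow> ('b \<times> bool) list) \<Rightarrow> bool" where
  "commuting_subst V1 E1 V2 E2 \<sigma> \<longleftrightarrow> (\<forall>x\<in>V1. \<sigma> x \<in> words V2) \<and>
     (\<forall>x\<in>V1. \<forall>y\<in>V1. E1 x y \<longrightarrow> raag_equiv V2 E2 (\<sigma> x @ \<sigma> y) (\<sigma> y @ \<sigma> x))"

lemma commuting_subst_words:
  "commuting_subst V1 E1 V2 E2 \<sigma> \<Longrightarrow> w \<in> words V1 \<Longrightarrow> word_subst \<sigma> w \<in> words V2"
  by (rule word_subst_words) (auto simp: commuting_subst_def)

lemma letter_subst_commute:
  assumes \<sigma>: "commuting_subst V1 E1 V2 E2 \<sigma>" and xy: "x \<in> V1" "y \<in> V1" "E1 x y"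
  shows "raag_equiv V2 E2 (letter_subst \<sigma> (x, b) @ letter_subst \<sigma> (y, c))
    (letter_subst \<sigma> (y, c) @ letter_subst \<sigma> (x, b))"
proof -
  have p: "\<sigma> x \<in> words V2" and q: "\<sigma> y \<in> words V2"
    and pq: "raag_equiv V2 E2 (\<sigma> x @ \<sigma> y) (\<sigma> y @ \<sigma> x)"
    using \<sigma> xy unfolding commuting_subst_def by auto
  have "raag_equiv V2 E2 (word_inv (\<sigma> x) @ \<sigma> y) (\<sigma> y @ word_inv (\<sigma> x))"
    by (rule raag_equiv_commute_word_inv[OF p q pq])
  moreover have "raag_equiv V2 E2 (\<sigma> x @ word_inv (\<sigma> y)) (word_inv (\<sigma> y) @ \<sigma> x)"
    by (rule raag_equiv_sym[OF raag_equiv_commute_word_inv[OF q p raag_equiv_sym[OF pq]]])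
  moreover from this have "raag_equiv V2 E2 (word_inv (\<sigma> x) @ word_inv (\<sigma> y))
      (word_inv (\<sigma> y) @ word_inv (\<sigma> x))"
    using raag_equiv_commute_word_inv[of "\<sigma> x" V2 "word_inv (\<sigma> y)"] p q by simp
  ultimately show ?thesis using pq by auto
qed

lemma word_subst_raag_step:
  assumes \<sigma>: "commuting_subst V1 E1 V2 E2 \<sigma>"
  shows "raag_step V1 E1 a b \<Longrightarrow> raag_equiv V2 E2 (word_subst \<sigma> a) (word_subst \<sigma> b)"
proof (induction rule: raag_step.induct)
  case (cancel x xs ys b)
  have "raag_equiv V2 E2 (word_subst \<sigma> xs @ (letter_subst \<sigma> (x, b) @ word_inv (letter_subst \<sigma> (x, b)))
      @ word_subst \<sigma> ys) (word_subst \<sigma> xs @ [] @ word_subst \<sigma> ys)"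
    using cancel commuting_subst_words[OF \<sigma>, of "[(x, b)]"]
    by (intro raag_equiv_context raag_equiv_append_word_inv commuting_subst_words[OF \<sigma>]) auto
  then show ?case by (simp add: letter_subst_Not del: letter_subst.simps)
next
  case (commute x y xs ys b c)
  have "raag_equiv V2 E2 (word_subst \<sigma> xs @ (letter_subst \<sigma> (x, b) @ letter_subst \<sigma> (y, c)) @ word_subst \<sigma> ys)
      (word_subst \<sigma> xs @ (letter_subst \<sigma> (y, c) @ letter_subst \<sigma> (x, b)) @ word_subst \<sigma> ys)"
    using commute
    by (intro raag_equiv_context letter_subst_commute[OF \<sigma>] commuting_subst_words[OF \<sigma>]) auto
  then show ?case by (simp del: letter_subst.simps)
qed

lemma word_subst_raag_equiv:
  assumes \<sigma>: "commuting_subst V1 E1 V2 E2 \<sigma>" and "raag_equiv V1 E1 a b"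
  shows "raag_equiv V2 E2 (word_subst \<sigma> a) (word_subst \<sigma> b)"
  using assms(2) unfolding raag_equiv_eq_equivclp[of V1]
proof (induction rule: equivclp_induct)
  case (step y z)
  then have "raag_equiv V2 E2 (word_subst \<sigma> y) (word_subst \<sigma> z)"
    using word_subst_raag_step[OF \<sigma>] raag_equiv_sym by blast
  with step(3) show ?case by (rule raag_equiv_trans)
qed simp

lemma word_subst_cong:
  assumes "\<And>x. x \<in> V1 \<Longrightarrow> \<rho> x \<in> words V2 \<and> raag_equiv V2 E2 (\<rho> x) (\<rho>' x)"
  shows "w \<in> words V1 \<Longrightarrow> raag_equiv V2 E2 (word_subst \<rho> w) (word_subst \<rho>' w)"
proof (induction w)
  case (Cons a w)
  obtain x b where a: "a = (x, b)" by force
  have x: "x \<in> V1" using Cons a by auto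
  have "raag_equiv V2 E2 (letter_subst \<rho> (x, b)) (letter_subst \<rho>' (x, b))"
    using assms[OF x] raag_equiv_word_inv by auto
  moreover have "letter_subst \<rho> (x, b) \<in> words V2" using assms[OF x] by auto
  moreover have "word_subst \<rho> w \<in> words V2"
    using word_subst_words[of V1 \<rho> V2] assms Cons by auto
  ultimately show ?case using raag_equiv_append Cons a by (simp del: letter_subst.simps)
qed simp

lemma commuting_subst_comp:
  assumes \<sigma>: "commuting_subst V1 E1 V2 E2 \<sigma>" and \<tau>: "commuting_subst V2 E2 V3 E3 \<tau>"
  shows "commuting_subst V1 E1 V3 E3 (\<lambda>x. word_subst \<tau> (\<sigma> x))"
  unfolding commuting_subst_def
proof (intro conjI ballI impI)
  fix x assume "x \<in> V1"
  then show "word_subst \<tau> (\<sigma> x) \<in> words V3"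
    using \<sigma> commuting_subst_words[OF \<tau>] unfolding commuting_subst_def by blast
next
  fix x y assume "x \<in> V1" "y \<in> V1" "E1 x y"
  then have "raag_equiv V2 E2 (\<sigma> x @ \<sigma> y) (\<sigma> y @ \<sigma> x)"
    using \<sigma> unfolding commuting_subst_def by blast
  from word_subst_raag_equiv[OF \<tau> this]
  show "raag_equiv V3 E3 (word_subst \<tau> (\<sigma> x) @ word_subst \<tau> (\<sigma> y))
      (word_subst \<tau> (\<sigma> y) @ word_subst \<tau> (\<sigma> x))"
    by simp
qed

lemma commuting_subst_letter: "commuting_subst V E V E (\<lambda>x. [(x, True)])"
  unfolding commuting_subst_def
  using raag_equiv_commute[of _ V _ E "[]" "[]" True True] by auto

lemma raag_class_eq_iff: "raag_class V E a = raag_class V E b \<longleftrightarrow> raag_equiv V E a b"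
proof
  assume "raag_class V E a = raag_class V E b"
  then have "b \<in> raag_class V E a" by (simp add: raag_class_def)
  then show "raag_equiv V E a b" by (simp add: raag_class_def)
next
  assume "raag_equiv V E a b"
  then show "raag_class V E a = raag_class V E b"
    unfolding raag_class_def using raag_equiv_sym raag_equiv_trans by blast
qed


lemma raag_equiv_some_class: "raag_equiv V E a (SOME c. c \<in> raag_class V E a)"
proof -
  have "a \<in> raag_class V E a" by (simp add: raag_class_def)
  then have "(SOME c. c \<in> raag_class V E a) \<in> raag_class V E a" by (rule someI)
  then show ?thesis by (simp add: raag_class_def)
qed

lemma carrier_raag: "carrier (raag V E) = raag_class V E ` words V"
  by (simp add: raag_def)

lemma mult_raag:
  assumes "a \<in> words V" "b \<in> words V"
  shows "raag_class V E a \<otimes>\<^bsub>raag V E\<^esub> raag_class V E b = raag_class V E (a @ b)"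
proof -
  have "raag_equiv V E (a @ b) ((SOME c. c \<in> raag_class V E a) @ (SOME c. c \<in> raag_class V E b))"
    using assms by (intro raag_equiv_append raag_equiv_some_class)
  then show ?thesis by (simp add: raag_def raag_class_eq_iff raag_equiv_sym)
qed

lemma mult_raag_closed:
  assumes "A \<in> carrier (raag V E)" "B \<in> carrier (raag V E)"
  shows "A \<otimes>\<^bsub>raag V E\<^esub> B \<in> carrier (raag V E)"
proof -
  obtain a b where "a \<in> words V" "A = raag_class V E a" "b \<in> words V" "B = raag_class V E b"
    using assms by (auto simp: carrier_raag)
  then show ?thesis by (simp add: mult_raag carrier_raag)
qed

definition class_subst :: "'b set \<Rightarrow> ('b \<Rightarrow> 'b \<Rightarrow> bool) \<Rightarrow> ('a \<Rightarrow> ('b \<times> bool) list)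
    \<Rightarrow> ('a \<times> bool) list set \<Rightarrow> ('b \<times> bool) list set" where
  "class_subst V E \<sigma> A = raag_class V E (word_subst \<sigma> (SOME a. a \<in> A))"

lemma class_subst_raag_class:
  assumes "commuting_subst V1 E1 V2 E2 \<sigma>"
  shows "class_subst V2 E2 \<sigma> (raag_class V1 E1 a) = raag_class V2 E2 (word_subst \<sigma> a)"
  unfolding class_subst_def raag_class_eq_iff
  using word_subst_raag_equiv[OF assms raag_equiv_some_class] by (rule raag_equiv_sym)

lemma class_subst_hom:
  assumes \<sigma>: "commuting_subst V1 E1 V2 E2 \<sigma>"
  shows "class_subst V2 E2 \<sigma> \<in> hom (raag V1 E1) (raag V2 E2)"
proof (rule homI)
  fix A assume "A \<in> carrier (raag V1 E1)"
  then obtain a where "a \<in> words V1" "A = raag_class V1 E1 a" by (auto simp: carrier_raag)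
  then show "class_subst V2 E2 \<sigma> A \<in> carrier (raag V2 E2)"
    by (simp add: carrier_raag class_subst_raag_class[OF \<sigma>] commuting_subst_words[OF \<sigma>])
next
  fix A B assume "A \<in> carrier (raag V1 E1)" "B \<in> carrier (raag V1 E1)"
  then obtain a b where "a \<in> words V1" "A = raag_class V1 E1 a" "b \<in> words V1" "B = raag_class V1 E1 b"
    by (auto simp: carrier_raag)
  then show "class_subst V2 E2 \<sigma> (A \<otimes>\<^bsub>raag V1 E1\<^esub> B)
      = class_subst V2 E2 \<sigma> A \<otimes>\<^bsub>raag V2 E2\<^esub> class_subst V2 E2 \<sigma> B"
    by (simp add: mult_raag class_subst_raag_class[OF \<sigma>] commuting_subst_words[OF \<sigma>])
qed

lemma class_subst_class_subst:
  assumes \<sigma>: "commuting_subst V1 E1 V2 E2 \<sigma>" and \<tau>: "commuting_subst V2 E2 V3 E3 \<tau>"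
    and "A \<in> carrier (raag V1 E1)"
  shows "class_subst V3 E3 \<tau> (class_subst V2 E2 \<sigma> A) = class_subst V3 E3 (\<lambda>x. word_subst \<tau> (\<sigma> x)) A"
proof -
  obtain a where "A = raag_class V1 E1 a" using assms(3) by (auto simp: carrier_raag)
  then show ?thesis
    by (simp add: class_subst_raag_class[OF \<sigma>] class_subst_raag_class[OF \<tau>]
        class_subst_raag_class[OF commuting_subst_comp[OF \<sigma> \<tau>]] word_subst_word_subst)
qed

lemma class_subst_iso:
  assumes \<sigma>: "commuting_subst V E V E \<sigma>" and \<tau>: "commuting_subst V E V E \<tau>"
    and \<tau>\<sigma>: "\<And>x. x \<in> V \<Longrightarrow> raag_equiv V E (word_subst \<tau> (\<sigma> x)) [(x, True)]"
    and \<sigma>\<tau>: "\<And>x. x \<in> V \<Longrightarrow> raag_equiv V E (word_subst \<sigma> (\<tau> x)) [(x, True)]"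
  shows "class_subst V E \<sigma> \<in> iso (raag V E) (raag V E)"
proof (rule isoI[OF class_subst_hom[OF \<sigma>]])
  have inverse: "class_subst V E \<beta> (class_subst V E \<alpha> A) = A"
    if \<alpha>: "commuting_subst V E V E \<alpha>" and \<beta>: "commuting_subst V E V E \<beta>"
      and \<beta>\<alpha>: "\<And>x. x \<in> V \<Longrightarrow> raag_equiv V E (word_subst \<beta> (\<alpha> x)) [(x, True)]"
      and A: "A \<in> carrier (raag V E)" for \<alpha> \<beta> A
  proof -
    obtain a where a: "a \<in> words V" "A = raag_class V E a" using A by (auto simp: carrier_raag)
    have "raag_equiv V E (word_subst (\<lambda>x. word_subst \<beta> (\<alpha> x)) a) (word_subst (\<lambda>x. [(x, True)]) a)"
      using \<beta>\<alpha> commuting_subst_comp[OF \<alpha> \<beta>] a(1)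
      by (intro word_subst_cong) (auto simp: commuting_subst_def)
    then show ?thesis
      using a class_subst_class_subst[OF \<alpha> \<beta> A]
      by (simp add: class_subst_raag_class[OF commuting_subst_comp[OF \<alpha> \<beta>]] raag_class_eq_iff)
  qed
  have maps: "class_subst V E \<alpha> ` carrier (raag V E) \<subseteq> carrier (raag V E)"
    if "commuting_subst V E V E \<alpha>" for \<alpha>
    using class_subst_hom[OF that] by (auto simp: hom_def)
  show "bij_betw (class_subst V E \<sigma>) (carrier (raag V E)) (carrier (raag V E))"
    by (rule bij_betw_byWitness[where f' = "class_subst V E \<tau>"])
      (use inverse[OF \<sigma> \<tau> \<tau>\<sigma>] inverse[OF \<tau> \<sigma> \<sigma>\<tau>] maps[OF \<sigma>] maps[OF \<tau>] in auto)
qed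

lemma iso_cong:
  assumes f: "f \<in> iso G H" and eq: "\<And>x. x \<in> carrier G \<Longrightarrow> g x = f x"
    and closed: "\<And>x y. x \<in> carrier G \<Longrightarrow> y \<in> carrier G \<Longrightarrow> x \<otimes>\<^bsub>G\<^esub> y \<in> carrier G"
  shows "g \<in> iso G H"
proof (rule isoI)
  have hom: "f \<in> hom G H" and bij: "bij_betw f (carrier G) (carrier H)"
    using f by (auto simp: iso_def)
  show "g \<in> hom G H"
  proof (rule homI)
    show "g x \<in> carrier H" if "x \<in> carrier G" for x
      using that eq hom by (simp add: hom_in_carrier)
    show "g (x \<otimes>\<^bsub>G\<^esub> y) = g x \<otimes>\<^bsub>H\<^esub> g y" if "x \<in> carrier G" "y \<in> carrier G" for x y
      using that eq closed hom by (simp add: hom_mult)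
  qed
  show "bij_betw g (carrier G) (carrier H)"
    using bij eq bij_betw_cong by blast
qed

section \<open>Partial conjugations\<close>

lemma mem_st_iff: "z \<in> st V E u \<longleftrightarrow> z = u \<or> z \<in> V \<and> E u z"
  by (auto simp: st_def lk_def)

lemma raag_equiv_commute_star:
  assumes u: "u \<in> V" and y: "y \<in> st V E u" and xs: "xs \<in> words V" and ys: "ys \<in> words V"
  shows "raag_equiv V E (xs @ (u, c) # (y, d) # ys) (xs @ (y, d) # (u, c) # ys)"
proof (cases "y = u")
  case True
  show ?thesis
  proof (cases "d = c")
    case False
    then have "d = (\<not> c)" by blast
    then have "raag_equiv V E (xs @ (u, c) # (y, d) # ys) (xs @ ys)"
      and "raag_equiv V E (xs @ (y, d) # (u, c) # ys) (xs @ ys)"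
      using raag_equiv_cancel[OF u xs ys, of E c] raag_equiv_cancel[OF u xs ys, of E "\<not> c"] True
      by simp_all
    then show ?thesis by (metis raag_equiv_sym raag_equiv_trans)
  qed (use True in simp)
next
  case False
  with y have "y \<in> V" "E u y" by (auto simp: mem_st_iff)
  then show ?thesis using raag_equiv_commute[OF u _ _ xs ys] by simp
qed

definition pconj_word :: "'v \<Rightarrow> 'v set \<Rightarrow> bool \<Rightarrow> 'v \<Rightarrow> ('v \<times> bool) list" where
  "pconj_word u C e x = (if x \<in> C then [(u, e), (x, True), (u, \<not> e)] else [(x, True)])"

text \<open>Every edge leaving \<open>C\<close> ends in \<open>st(u)\<close>; for \<open>C \<subseteq> V - st(u)\<close> this says that \<open>C\<close> is a
  union of components of \<open>V - st(u)\<close>.\<close>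
definition pconj_domain :: "'v set \<Rightarrow> ('v \<Rightarrow> 'v \<Rightarrow> bool) \<Rightarrow> 'v \<Rightarrow> 'v set \<Rightarrow> bool" where
  "pconj_domain V E u C \<longleftrightarrow> u \<in> V \<and> u \<notin> C \<and>
     (\<forall>a\<in>C. \<forall>b\<in>V. E a b \<longrightarrow> b \<notin> C \<longrightarrow> b \<in> st V E u)"

lemma raag_equiv_conj_commute:
  assumes u: "u \<in> V" and x: "x \<in> V" and E: "E x y" and y: "y \<in> st V E u"
  shows "raag_equiv V E ([(u, e), (x, True), (u, \<not> e)] @ [(y, True)])
    ([(y, True)] @ [(u, e), (x, True), (u, \<not> e)])"
proof -
  have "raag_equiv V E ([(u, e), (x, True)] @ (u, \<not> e) # (y, True) # [])
      ([(u, e), (x, True)] @ (y, True) # (u, \<not> e) # [])"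
    using u x y by (intro raag_equiv_commute_star) auto
  also have "\<dots> = [(u, e)] @ (x, True) # (y, True) # [(u, \<not> e)]" by simp
  also have "raag_equiv V E \<dots> ([(u, e)] @ (y, True) # (x, True) # [(u, \<not> e)])"
    using u x y E by (intro raag_equiv_commute) (auto simp: mem_st_iff)
  also have "\<dots> = [] @ (u, e) # (y, True) # [(x, True), (u, \<not> e)]" by simp
  also have "raag_equiv V E \<dots> ([] @ (y, True) # (u, e) # [(x, True), (u, \<not> e)])"
    using u x y by (intro raag_equiv_commute_star) auto
  finally show ?thesis by simp
qed

lemma raag_equiv_conj_commute_conj:
  assumes u: "u \<in> V" and x: "x \<in> V" and y: "y \<in> V" and E: "E x y"
  shows "raag_equiv V E ([(u, e), (x, True), (u, \<not> e)] @ [(u, e), (y, True), (u, \<not> e)])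
    ([(u, e), (y, True), (u, \<not> e)] @ [(u, e), (x, True), (u, \<not> e)])"
proof -
  have "raag_equiv V E ([(u, e), (x, True)] @ (u, \<not> e) # (u, \<not> \<not> e) # [(y, True), (u, \<not> e)])
      ([(u, e), (x, True)] @ [(y, True), (u, \<not> e)])"
    using u x y by (intro raag_equiv_cancel) auto
  also have "\<dots> = [(u, e)] @ (x, True) # (y, True) # [(u, \<not> e)]" by simp
  also have "raag_equiv V E \<dots> ([(u, e)] @ (y, True) # (x, True) # [(u, \<not> e)])"
    using u x y E by (intro raag_equiv_commute) auto
  also have "\<dots> = [(u, e), (y, True)] @ [(x, True), (u, \<not> e)]" by simp
  also have "raag_equiv V E \<dots>
      ([(u, e), (y, True)] @ (u, \<not> e) # (u, \<not> \<not> e) # [(x, True), (u, \<not> e)])"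
    using u x y by (intro raag_equiv_sym[OF raag_equiv_cancel]) auto
  finally show ?thesis by simp
qed

lemma commuting_subst_pconj_word:
  assumes C: "pconj_domain V E u C" and sym: "\<And>a b. E a b \<Longrightarrow> E b a"
  shows "commuting_subst V E V E (pconj_word u C e)"
  unfolding commuting_subst_def
proof (intro conjI ballI impI)
  have u: "u \<in> V" and closed: "\<And>a b. a \<in> C \<Longrightarrow> b \<in> V \<Longrightarrow> E a b \<Longrightarrow> b \<notin> C \<Longrightarrow> b \<in> st V E u"
    using C by (auto simp: pconj_domain_def)
  show "pconj_word u C e x \<in> words V" if "x \<in> V" for x
    using that u by (auto simp: pconj_word_def)
  fix x y assume x: "x \<in> V" and y: "y \<in> V" and E: "E x y"
  consider "x \<in> C" "y \<in> C" | "x \<in> C" "y \<notin> C" | "x \<notin> C" "y \<in> C" | "x \<notin> C" "y \<notin> C"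
    by blast
  then show "raag_equiv V E (pconj_word u C e x @ pconj_word u C e y)
      (pconj_word u C e y @ pconj_word u C e x)"
  proof cases
    case 1
    then show ?thesis
      using raag_equiv_conj_commute_conj[where E = E, OF u x y E, of e] by (simp add: pconj_word_def)
  next
    case 2
    then show ?thesis
      using raag_equiv_conj_commute[OF u x E closed[OF 2(1) y E 2(2)], of e] by (simp add: pconj_word_def)
  next
    case 3
    then show ?thesis
      using raag_equiv_sym[OF raag_equiv_conj_commute[OF u y sym[OF E] closed[OF 3(2) x sym[OF E] 3(1)]]]
      by (simp add: pconj_word_def)
  next
    case 4
    then show ?thesis
      using raag_equiv_commute[where E = E and xs = "[]" and ys = "[]" and b = True and c = True, OF x y E]
      by (simp add: pconj_word_def)
  qed
qed

lemma pconj_word_inverse: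
  assumes u: "u \<in> V" "u \<notin> C" and x: "x \<in> V"
  shows "raag_equiv V E (word_subst (pconj_word u C (\<not> e)) (pconj_word u C e x)) [(x, True)]"
proof (cases "x \<in> C")
  case True
  have "word_subst (pconj_word u C (\<not> e)) (pconj_word u C e x)
      = [] @ (u, e) # (u, \<not> e) # [(x, True), (u, e), (u, \<not> e)]"
    using True u by (auto simp: pconj_word_def)
  also have "raag_equiv V E \<dots> ([] @ [(x, True), (u, e), (u, \<not> e)])"
    using u x by (intro raag_equiv_cancel) auto
  also have "\<dots> = [(x, True)] @ (u, e) # (u, \<not> e) # []" by simp
  also have "raag_equiv V E \<dots> ([(x, True)] @ [])"
    using u x by (intro raag_equiv_cancel) auto
  finally show ?thesis by simp
qed (simp add: pconj_word_def)

lemma class_subst_pconj_word_iso: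
  assumes C: "pconj_domain V E u C" and sym: "\<And>a b. E a b \<Longrightarrow> E b a"
  shows "class_subst V E (pconj_word u C e) \<in> iso (raag V E) (raag V E)"
  using C pconj_word_inverse[of u V C, of _ E e] pconj_word_inverse[of u V C, of _ E "\<not> e"]
  by (intro class_subst_iso[OF commuting_subst_pconj_word[OF C sym] commuting_subst_pconj_word[OF C sym]])
    (auto simp: pconj_domain_def)

lemma pconj_eq_class_subst: "pconj V E v C = class_subst V E (pconj_word v C True)"
proof
  fix A
  have "(\<lambda>(x, b). if x \<in> C then [(v, True), (x, b), (v, False)] else [(x, b)])
      = letter_subst (pconj_word v C True)"
    by (auto simp: pconj_word_def)
  then show "pconj V E v C A = class_subst V E (pconj_word v C True) A"
    by (simp add: pconj_def class_subst_def word_subst_def)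
qed

lemma raag_induced_eq_class_subst: "raag_induced V E \<phi> = class_subst V E (\<lambda>x. [(\<phi> x, True)])"
proof
  fix A
  have "concat (map (letter_subst (\<lambda>x. [(\<phi> x, True)])) w) = map (\<lambda>(x, b). (\<phi> x, b)) w" for w
    by (induction w) auto
  then show "raag_induced V E \<phi> A = class_subst V E (\<lambda>x. [(\<phi> x, True)]) A"
    by (simp add: raag_induced_def class_subst_def word_subst_def)
qed

definition graph_hom :: "'a set \<Rightarrow> ('a \<Rightarrow> 'a \<Rightarrow> bool) \<Rightarrow> 'b set \<Rightarrow> ('b \<Rightarrow> 'b \<Rightarrow> bool)
    \<Rightarrow> ('a \<Rightarrow> 'b) \<Rightarrow> bool" where
  "graph_hom V1 E1 V2 E2 \<phi> \<longleftrightarrow> (\<forall>x\<in>V1. \<phi> x \<in> V2) \<and> (\<forall>x y. E1 x y \<longrightarrow> E2 (\<phi> x) (\<phi> y))"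

lemma commuting_subst_graph_hom:
  assumes "graph_hom V1 E1 V2 E2 \<phi>"
  shows "commuting_subst V1 E1 V2 E2 (\<lambda>x. [(\<phi> x, True)])"
  unfolding commuting_subst_def
proof (intro conjI ballI impI)
  fix x y assume "x \<in> V1" "y \<in> V1" "E1 x y"
  then have "\<phi> x \<in> V2" "\<phi> y \<in> V2" "E2 (\<phi> x) (\<phi> y)" using assms by (auto simp: graph_hom_def)
  from raag_equiv_commute[where E = E2 and xs = "[]" and ys = "[]" and b = True and c = True, OF this]
  show "raag_equiv V2 E2 ([(\<phi> x, True)] @ [(\<phi> y, True)]) ([(\<phi> y, True)] @ [(\<phi> x, True)])"
    by simp
qed (use assms in \<open>auto simp: graph_hom_def\<close>)

section \<open>Products of partial conjugations and liftability\<close>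

definition vertex_pow :: "'v \<Rightarrow> int \<Rightarrow> ('v \<times> bool) list" where
  "vertex_pow v k = (if 0 \<le> k then replicate (nat k) (v, True) else replicate (nat (- k)) (v, False))"

lemma replicate_in_words: "v \<in> V \<Longrightarrow> replicate n (v, b) \<in> words V"
  by (induction n) auto

lemma vertex_pow_words: "v \<in> V \<Longrightarrow> vertex_pow v k \<in> words V"
  by (simp add: vertex_pow_def replicate_in_words)

lemma vertex_pow_0 [simp]: "vertex_pow v 0 = []"
  and vertex_pow_1: "vertex_pow v 1 = [(v, True)]"
  and vertex_pow_minus_1: "vertex_pow v (- 1) = [(v, False)]"
  by (auto simp: vertex_pow_def)

lemma vertex_pow_nonneg: "0 \<le> k \<Longrightarrow> vertex_pow v k = replicate (nat k) (v, True)"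
  and vertex_pow_nonpos: "k \<le> 0 \<Longrightarrow> vertex_pow v k = replicate (nat (- k)) (v, False)"
  by (auto simp: vertex_pow_def)

lemma raag_equiv_vertex_pow_snoc:
  assumes v: "v \<in> V"
  shows "raag_equiv V E (vertex_pow v k @ [(v, True)]) (vertex_pow v (k + 1))"
    and "raag_equiv V E (vertex_pow v k @ [(v, False)]) (vertex_pow v (k - 1))"
proof -
  have cancel: "raag_equiv V E (replicate (Suc n) (v, b) @ [(v, \<not> b)]) (replicate n (v, b))" for n b
    using raag_equiv_cancel[where E = E and b = b and ys = "[]", OF v replicate_in_words[OF v]]
    by (simp add: replicate_append_same[symmetric])
  show "raag_equiv V E (vertex_pow v k @ [(v, True)]) (vertex_pow v (k + 1))"
  proof (cases "0 \<le> k")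
    case True
    then show ?thesis by (simp add: vertex_pow_nonneg nat_add_distrib replicate_append_same)
  next
    case False
    then have "nat (- k) = Suc (nat (- (k + 1)))" by simp
    then show ?thesis
      using False cancel[of "nat (- (k + 1))" False] by (simp add: vertex_pow_nonpos)
  qed
  show "raag_equiv V E (vertex_pow v k @ [(v, False)]) (vertex_pow v (k - 1))"
  proof (cases "0 < k")
    case True
    then have "nat k = Suc (nat (k - 1))" by simp
    then show ?thesis using True cancel[of "nat (k - 1)" True] by (simp add: vertex_pow_nonneg)
  next
    case False
    then have "nat (1 - k) = Suc (nat (- k))" by simp
    then show ?thesis using False by (simp add: vertex_pow_nonpos replicate_append_same)
  qed
qed

lemma raag_equiv_vertex_pow_add:
  assumes v: "v \<in> V"
  shows "raag_equiv V E (vertex_pow v a @ vertex_pow v b) (vertex_pow v (a + b))"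
proof (induction b rule: int_induct[where k = 0])
  case (step1 b)
  have "raag_equiv V E (vertex_pow v a @ vertex_pow v (b + 1)) (vertex_pow v a @ vertex_pow v b @ [(v, True)])"
    using raag_equiv_sym[OF raag_equiv_vertex_pow_snoc(1)[OF v, of E b]] vertex_pow_words[OF v]
    by (intro raag_equiv_append) auto
  also have "raag_equiv V E \<dots> (vertex_pow v (a + b) @ [(v, True)])"
    using step1 vertex_pow_words[OF v] v
    by (subst append_assoc[symmetric], intro raag_equiv_append) auto
  also have "raag_equiv V E \<dots> (vertex_pow v (a + (b + 1)))"
    using raag_equiv_vertex_pow_snoc(1)[OF v, of E "a + b"] by (simp add: add.assoc)
  finally show ?case .
next
  case (step2 b)
  have "raag_equiv V E (vertex_pow v a @ vertex_pow v (b - 1)) (vertex_pow v a @ vertex_pow v b @ [(v, False)])"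
    using raag_equiv_sym[OF raag_equiv_vertex_pow_snoc(2)[OF v, of E b]] vertex_pow_words[OF v]
    by (intro raag_equiv_append) auto
  also have "raag_equiv V E \<dots> (vertex_pow v (a + b) @ [(v, False)])"
    using step2 vertex_pow_words[OF v] v
    by (subst append_assoc[symmetric], intro raag_equiv_append) auto
  also have "raag_equiv V E \<dots> (vertex_pow v (a + (b - 1)))"
    using raag_equiv_vertex_pow_snoc(2)[OF v, of E "a + b"] by (simp add: algebra_simps)
  finally show ?case .
qed simp

lemma raag_equiv_vertex_pow_commute:
  assumes v: "v \<in> V" and y: "y \<in> st V E v"
  shows "raag_equiv V E (vertex_pow v k @ [(y, True)]) ([(y, True)] @ vertex_pow v k)"
proof -
  have "raag_equiv V E (replicate n (v, c) @ [(y, True)]) ([(y, True)] @ replicate n (v, c))" for n c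
  proof (induction n)
    case (Suc n)
    have "raag_equiv V E ([(v, c)] @ (replicate n (v, c) @ [(y, True)]) @ [])
        ([(v, c)] @ ([(y, True)] @ replicate n (v, c)) @ [])"
      using v by (intro raag_equiv_context Suc.IH) auto
    also have "\<dots> = [] @ (v, c) # (y, True) # replicate n (v, c)" by simp
    also have "raag_equiv V E \<dots> ([] @ (y, True) # (v, c) # replicate n (v, c))"
      using v y replicate_in_words[OF v] by (intro raag_equiv_commute_star) auto
    finally show ?case by simp
  qed simp
  then show ?thesis by (simp add: vertex_pow_def)
qed

lemma raag_equiv_conj_vertex_pow_star:
  assumes v: "v \<in> V" and yv: "y \<in> st V E v"
  shows "raag_equiv V E (vertex_pow v k @ [(y, True)] @ vertex_pow v (- k)) [(y, True)]"
proof -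
  have y: "y \<in> V" using v yv by (auto simp: mem_st_iff)
  have "raag_equiv V E ((vertex_pow v k @ [(y, True)]) @ vertex_pow v (- k))
      (([(y, True)] @ vertex_pow v k) @ vertex_pow v (- k))"
    using vertex_pow_words[OF v] y
    by (intro raag_equiv_append[OF raag_equiv_vertex_pow_commute[OF v yv] raag_equiv_refl]) auto
  also have "\<dots> = [(y, True)] @ (vertex_pow v k @ vertex_pow v (- k)) @ []" by simp
  also have "raag_equiv V E \<dots> ([(y, True)] @ vertex_pow v (k + - k) @ [])"
    using raag_equiv_vertex_pow_add[OF v, of E k "- k"] y
    by (intro raag_equiv_context) auto
  finally show ?thesis by simp
qed

lemma raag_equiv_conj_vertex_pow_add:
  assumes v: "v \<in> V" and y: "y \<in> V"
  shows "raag_equiv V E (vertex_pow v s @ (vertex_pow v k @ [(y, True)] @ vertex_pow v (- k)) @ vertex_pow v (- s))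
    (vertex_pow v (s + k) @ [(y, True)] @ vertex_pow v (- (s + k)))"
proof -
  have "vertex_pow v s @ (vertex_pow v k @ [(y, True)] @ vertex_pow v (- k)) @ vertex_pow v (- s)
      = (vertex_pow v s @ vertex_pow v k) @ [(y, True)] @ (vertex_pow v (- k) @ vertex_pow v (- s))"
    by simp
  also have "raag_equiv V E \<dots> (vertex_pow v (s + k) @ [(y, True)] @ vertex_pow v (- k + - s))"
    using v y vertex_pow_words[OF v]
    by (intro raag_equiv_append raag_equiv_vertex_pow_add) auto
  finally show ?thesis by (simp add: add.commute)
qed

fun pconj_prod_word :: "('v \<times> 'v set \<times> bool) list \<Rightarrow> 'v \<Rightarrow> ('v \<times> bool) list" where
  "pconj_prod_word [] = (\<lambda>x. [(x, True)])"
| "pconj_prod_word ((u, C, e) # L) = (\<lambda>x. word_subst (pconj_prod_word L) (pconj_word u C e x))"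

fun conj_exponent :: "('v \<times> 'v set \<times> bool) list \<Rightarrow> 'v \<Rightarrow> int" where
  "conj_exponent [] w = 0"
| "conj_exponent ((u, C, e) # L) w = (if w \<in> C then (if e then 1 else - 1) else 0) + conj_exponent L w"

lemma conj_exponent_append: "conj_exponent (L1 @ L2) w = conj_exponent L1 w + conj_exponent L2 w"
  by (induction L1) auto

lemma conj_exponent_map:
  "conj_exponent (map (\<lambda>u. (u, C u, True)) us) w = int (length (filter (\<lambda>u. w \<in> C u) us))"
  by (induction us) auto

lemma conj_exponent_replicate:
  "conj_exponent (replicate n (u, C, e)) w = (if w \<in> C then (if e then int n else - int n) else 0)"
  by (induction n) auto

lemma commuting_subst_pconj_prod_word:
  assumes "\<forall>(u, C, e) \<in> set L. pconj_domain V E u C" and sym: "\<And>a b. E a b \<Longrightarrow> E b a"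
  shows "commuting_subst V E V E (pconj_prod_word L)"
  using assms(1)
proof (induction L)
  case Nil
  then show ?case by (simp add: commuting_subst_letter)
next
  case (Cons op L)
  obtain u C e where op: "op = (u, C, e)" by (cases op) auto
  have "commuting_subst V E V E (pconj_word u C e)"
    using Cons.prems op by (intro commuting_subst_pconj_word[OF _ sym]) auto
  from commuting_subst_comp[OF this Cons.IH] Cons.prems show ?case by (simp add: op)
qed

lemma class_subst_pconj_prod_word_iso:
  assumes L: "\<forall>(u, C, e) \<in> set L. pconj_domain V E u C" and sym: "\<And>a b. E a b \<Longrightarrow> E b a"
  shows "class_subst V E (pconj_prod_word L) \<in> iso (raag V E) (raag V E)"
  using L
proof (induction L)
  case Nil
  then show ?case
    using class_subst_iso[OF commuting_subst_letter commuting_subst_letter] by simp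
next
  case (Cons op L)
  obtain u C e where op: "op = (u, C, e)" by (cases op) auto
  have C: "pconj_domain V E u C" using Cons.prems op by auto
  have L: "\<forall>(u, C, e) \<in> set L. pconj_domain V E u C" using Cons.prems by auto
  have "class_subst V E (pconj_prod_word L) \<circ> class_subst V E (pconj_word u C e) \<in> iso (raag V E) (raag V E)"
    using iso_set_trans[OF class_subst_pconj_word_iso[OF C sym] Cons.IH[OF L]] .
  then show ?case
  proof (rule iso_cong[OF _ _ mult_raag_closed])
    fix A assume "A \<in> carrier (raag V E)"
    then show "class_subst V E (pconj_prod_word (op # L)) A
        = (class_subst V E (pconj_prod_word L) \<circ> class_subst V E (pconj_word u C e)) A"
      using class_subst_class_subst[OF commuting_subst_pconj_word[OF C sym]
          commuting_subst_pconj_prod_word[OF L sym]]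
      by (simp add: op)
  qed
qed

lemma raag_equiv_word_subst_pconj_word:
  assumes v: "v \<in> V" and \<rho>: "commuting_subst V' E' V E \<rho>"
    and u: "u \<in> V'" "\<phi> u = v" and w: "w \<in> V'" "\<phi> w \<in> V"
    and conj: "\<And>y. y \<in> V' \<Longrightarrow> raag_equiv V E (\<rho> y)
      (vertex_pow v (k y) @ [(\<phi> y, True)] @ vertex_pow v (- k y))"
  shows "raag_equiv V E (word_subst \<rho> (pconj_word u C e w))
    (vertex_pow v ((if w \<in> C then (if e then 1 else - 1) else 0) + k w) @ [(\<phi> w, True)]
      @ vertex_pow v (- ((if w \<in> C then (if e then 1 else - 1) else 0) + k w)))"
proof (cases "w \<in> C")
  case True
  have \<rho>u: "raag_equiv V E (\<rho> u) [(v, True)]"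
    using raag_equiv_trans[OF conj[OF u(1)] raag_equiv_conj_vertex_pow_star[OF v]] u
    by (simp add: st_def)
  then have letter: "raag_equiv V E (letter_subst \<rho> (u, b)) (vertex_pow v (if b then 1 else - 1))" for b
    using raag_equiv_word_inv[OF \<rho>u] by (auto simp: vertex_pow_1 vertex_pow_minus_1)
  have words: "\<rho> w \<in> words V" "letter_subst \<rho> (u, b) \<in> words V" for b
    using \<rho> w u commuting_subst_words[OF \<rho>, of "[(u, b)]"] by (auto simp: commuting_subst_def)
  define s :: int where "s = (if e then 1 else - 1)"
  have "word_subst \<rho> (pconj_word u C e w) = letter_subst \<rho> (u, e) @ \<rho> w @ letter_subst \<rho> (u, \<not> e)"
    using True by (simp add: pconj_word_def del: letter_subst.simps) simp
  also have "raag_equiv V E \<dots> (vertex_pow v s @ (vertex_pow v (k w) @ [(\<phi> w, True)]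
      @ vertex_pow v (- k w)) @ vertex_pow v (- s))"
    using letter[of e] letter[of "\<not> e"] conj[OF w(1)] words
    by (intro raag_equiv_append) (auto simp: s_def)
  also have "raag_equiv V E \<dots> (vertex_pow v (s + k w) @ [(\<phi> w, True)] @ vertex_pow v (- (s + k w)))"
    by (rule raag_equiv_conj_vertex_pow_add[OF v w(2)])
  finally show ?thesis using True by (simp add: s_def)
next
  case False
  then show ?thesis using conj[OF w(1)] by (simp add: pconj_word_def)
qed

lemma raag_equiv_pconj_prod_word_image:
  assumes hom: "graph_hom VL EL VG EG \<phi>" and symL: "\<And>a b. EL a b \<Longrightarrow> EL b a" and v: "v \<in> VG"
    and L: "\<forall>(u, C, e) \<in> set L. pconj_domain VL EL u C \<and> \<phi> u = v"
    and w: "w \<in> VL"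
  shows "raag_equiv VG EG (word_subst (\<lambda>x. [(\<phi> x, True)]) (pconj_prod_word L w))
    (vertex_pow v (conj_exponent L w) @ [(\<phi> w, True)] @ vertex_pow v (- conj_exponent L w))"
  using L w
proof (induction L arbitrary: w)
  case (Cons op L)
  obtain u C e where op: "op = (u, C, e)" by (cases op) auto
  have u: "u \<in> VL" "\<phi> u = v" using Cons.prems op by (auto simp: pconj_domain_def)
  have L: "\<forall>(u, C, e) \<in> set L. pconj_domain VL EL u C" using Cons.prems by auto
  let ?\<rho> = "\<lambda>y. word_subst (\<lambda>x. [(\<phi> x, True)]) (pconj_prod_word L y)"
  have \<rho>: "commuting_subst VL EL VG EG ?\<rho>"
    by (rule commuting_subst_comp[OF commuting_subst_pconj_prod_word[OF L symL]
          commuting_subst_graph_hom[OF hom]])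
  have IH: "raag_equiv VG EG (?\<rho> y)
      (vertex_pow v (conj_exponent L y) @ [(\<phi> y, True)] @ vertex_pow v (- conj_exponent L y))"
    if "y \<in> VL" for y
    using Cons.IH[OF _ that] Cons.prems(1) by simp
  have "\<phi> w \<in> VG" using hom Cons.prems(2) by (simp add: graph_hom_def)
  have "word_subst (\<lambda>x. [(\<phi> x, True)]) (pconj_prod_word (op # L) w) = word_subst ?\<rho> (pconj_word u C e w)"
    by (simp add: op word_subst_word_subst)
  also have "raag_equiv VG EG \<dots> (vertex_pow v (conj_exponent (op # L) w) @ [(\<phi> w, True)]
      @ vertex_pow v (- conj_exponent (op # L) w))"
    using raag_equiv_word_subst_pconj_word[OF v \<rho> u Cons.prems(2) \<open>\<phi> w \<in> VG\<close> IH] by (simp add: op)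
  finally show ?case .
qed simp

lemma raag_equiv_pconj_word_vertex_pow:
  assumes v: "v \<in> V" and y: "y \<in> V"
    and in_C: "y \<in> C \<Longrightarrow> k = 1" and off_C: "y \<notin> C \<Longrightarrow> y \<notin> st V E v \<Longrightarrow> k = 0"
  shows "raag_equiv V E (pconj_word v C True y) (vertex_pow v k @ [(y, True)] @ vertex_pow v (- k))"
proof (cases "y \<notin> C \<and> y \<in> st V E v")
  case True
  then show ?thesis
    using raag_equiv_sym[OF raag_equiv_conj_vertex_pow_star[OF v, of y E k]]
    by (simp add: pconj_word_def)
next
  case False
  then show ?thesis using in_C off_C by (auto simp: pconj_word_def vertex_pow_1 vertex_pow_minus_1)
qed

lemma liftable_pconj_if_conj_exponents:
  assumes symL: "\<And>a b. EL a b \<Longrightarrow> EL b a" and symG: "\<And>a b. EG a b \<Longrightarrow> EG b a"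
    and hom: "graph_hom VL EL VG EG \<phi>"
    and v: "v \<in> VG" and C: "pconj_domain VG EG v C"
    and L: "\<forall>(u, C', e) \<in> set L. pconj_domain VL EL u C' \<and> \<phi> u = v"
    and in_C: "\<And>w. w \<in> VL \<Longrightarrow> \<phi> w \<in> C \<Longrightarrow> conj_exponent L w = 1"
    and off_C: "\<And>w. w \<in> VL \<Longrightarrow> \<phi> w \<notin> C \<Longrightarrow> \<phi> w \<notin> st VG EG v \<Longrightarrow> conj_exponent L w = 0"
  shows "liftable VL EL VG EG \<phi> (pconj VG EG v C)"
  unfolding liftable_def
proof (intro conjI exI ballI)
  have L': "\<forall>(u, C', e) \<in> set L. pconj_domain VL EL u C'" using L by auto
  let ?\<phi> = "\<lambda>x. [(\<phi> x, True)]" and ?P = "pconj_word v C True" and ?F = "pconj_prod_word L"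
  have \<phi>: "commuting_subst VL EL VG EG ?\<phi>"
    by (rule commuting_subst_graph_hom[OF hom])
  have P: "commuting_subst VG EG VG EG ?P" by (rule commuting_subst_pconj_word[OF C symG])
  have F: "commuting_subst VL EL VL EL ?F" by (rule commuting_subst_pconj_prod_word[OF L' symL])
  show "pconj VG EG v C \<in> iso (raag VG EG) (raag VG EG)"
    unfolding pconj_eq_class_subst by (rule class_subst_pconj_word_iso[OF C symG])
  show "class_subst VL EL ?F \<in> iso (raag VL EL) (raag VL EL)"
    by (rule class_subst_pconj_prod_word_iso[OF L' symL])
  fix g assume "g \<in> carrier (raag VL EL)"
  then obtain a where a: "a \<in> words VL" "g = raag_class VL EL a" by (auto simp: carrier_raag)
  have "raag_equiv VG EG (word_subst (\<lambda>x. word_subst ?P (?\<phi> x)) a) (word_subst (\<lambda>x. word_subst ?\<phi> (?F x)) a)"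
  proof (rule word_subst_cong[OF _ a(1)])
    fix x assume x: "x \<in> VL"
    have "raag_equiv VG EG (?P (\<phi> x))
        (vertex_pow v (conj_exponent L x) @ [(\<phi> x, True)] @ vertex_pow v (- conj_exponent L x))"
      using in_C off_C x hom by (intro raag_equiv_pconj_word_vertex_pow[OF v]) (auto simp: graph_hom_def)
    also have "raag_equiv VG EG \<dots> (word_subst ?\<phi> (?F x))"
      by (rule raag_equiv_sym[OF raag_equiv_pconj_prod_word_image[OF hom symL v L x]])
    finally show "word_subst ?P (?\<phi> x) \<in> words VG
        \<and> raag_equiv VG EG (word_subst ?P (?\<phi> x)) (word_subst ?\<phi> (?F x))"
      using P x hom by (auto simp: commuting_subst_def graph_hom_def)
  qed
  then show "pconj VG EG v C (raag_induced VG EG \<phi> g) = raag_induced VG EG \<phi> (class_subst VL EL ?F g)"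
    unfolding pconj_eq_class_subst raag_induced_eq_class_subst a(2)
      class_subst_raag_class[OF \<phi>] class_subst_raag_class[OF P] class_subst_raag_class[OF F]
      word_subst_word_subst raag_class_eq_iff .
qed

section \<open>Components of star complements in the covering graph\<close>

lemma reach_in_refl [simp]: "reach_in S E a a"
  by (simp add: reach_in_def)

lemma reach_in_induct [consumes 1, case_names refl step]:
  assumes "reach_in S E a b" "P a"
    and "\<And>c d. reach_in S E a c \<Longrightarrow> c \<in> S \<Longrightarrow> d \<in> S \<Longrightarrow> E c d \<Longrightarrow> P c \<Longrightarrow> P d"
  shows "P b"
  using assms(1) unfolding reach_in_def
  by (induction rule: rtranclp_induct) (use assms(2,3) in \<open>auto simp: reach_in_def\<close>)

lemma reach_in_step: "reach_in S E a b \<Longrightarrow> b \<in> S \<Longrightarrow> c \<in> S \<Longrightarrow> E b c \<Longrightarrow> reach_in S E a c"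
  unfolding reach_in_def by (rule rtranclp.rtrancl_into_rtrancl) auto

lemma reach_in_trans: "reach_in S E a b \<Longrightarrow> reach_in S E b c \<Longrightarrow> reach_in S E a c"
  unfolding reach_in_def by (rule rtranclp_trans)

lemma reach_in_sym:
  assumes "\<And>a b. E a b \<Longrightarrow> E b a"
  shows "reach_in S E a b \<Longrightarrow> reach_in S E b a"
  unfolding reach_in_def
proof (induction rule: rtranclp_induct)
  case (step y z)
  then have "(\<lambda>a b. a \<in> S \<and> b \<in> S \<and> E a b) z y" using assms by auto
  then show ?case by (rule converse_rtranclp_into_rtranclp[OF _ step.IH])
qed simp

lemma reach_in_mem: "reach_in S E a b \<Longrightarrow> b = a \<or> b \<in> S"
  by (induction rule: reach_in_induct) auto

lemma reach_in_mono: "reach_in S E a b \<Longrightarrow> S \<subseteq> S' \<Longrightarrow> reach_in S' E a b"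
  unfolding reach_in_def by (erule rtranclp_mono[THEN predicate2D, rotated]) auto

locale covering_fiber =
  fixes VL :: "'a set" and EL :: "'a \<Rightarrow> 'a \<Rightarrow> bool" and VG :: "'b set" and EG :: "'b \<Rightarrow> 'b \<Rightarrow> bool"
    and \<phi> :: "'a \<Rightarrow> 'b" and v :: 'b
  assumes graph_L: "simple_graph VL EL" and graph_G: "simple_graph VG EG"
    and regular: "regular_covering VL EL VG EG \<phi>" and v: "v \<in> VG"
begin

lemma sym_L: "EL a b \<Longrightarrow> EL b a" and sym_G: "EG c d \<Longrightarrow> EG d c"
  and irrefl_G: "\<not> EG c c" and edge_L: "EL a b \<Longrightarrow> a \<in> VL \<and> b \<in> VL"
  and finite_VL: "finite VL"
  using graph_L graph_G by (auto simp: simple_graph_def)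

lemma covering: "covering_map VL EL VG EG \<phi>"
  using regular by (simp add: regular_covering_def)

lemma graph_hom: "graph_hom VL EL VG EG \<phi>"
  using covering by (auto simp: covering_map_def graph_hom_def)

lemma phi_vertex: "x \<in> VL \<Longrightarrow> \<phi> x \<in> VG" and phi_edge: "EL x y \<Longrightarrow> EG (\<phi> x) (\<phi> y)"
  using graph_hom by (auto simp: graph_hom_def)

lemma bij_betw_lk: "u \<in> VL \<Longrightarrow> bij_betw \<phi> (lk VL EL u) (lk VG EG (\<phi> u))"
  using covering by (simp add: covering_map_def)

lemma lift_neighbour:
  assumes "x \<in> VL" "EG (\<phi> x) b"
  obtains y where "y \<in> VL" "EL x y" "\<phi> y = b"
proof -
  have "b \<in> lk VG EG (\<phi> x)" using assms graph_G by (auto simp: lk_def simple_graph_def)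
  then have "b \<in> \<phi> ` lk VL EL x" using bij_betw_lk[OF assms(1)] by (simp add: bij_betw_def)
  then show ?thesis using that by (auto simp: lk_def)
qed

definition lifts :: "'a set" where
  "lifts = {u \<in> VL. \<phi> u = v}"

definition star_compl :: "'a \<Rightarrow> 'a set" where
  "star_compl u = VL - st VL EL u"

definition star_comp :: "'a \<Rightarrow> 'a \<Rightarrow> 'a set" where
  "star_comp u x = {y. reach_in (star_compl u) EL x y}"

definition graph_comp :: "'a \<Rightarrow> 'a set" where
  "graph_comp x = {y. reach_in VL EL x y}"

definition off_star :: "'a \<Rightarrow> bool" where
  "off_star x \<longleftrightarrow> x \<in> VL \<and> \<phi> x \<notin> st VG EG v"

definition common_comp :: "'a \<Rightarrow> 'a set" where
  "common_comp x = {y \<in> VL. \<forall>u\<in>lifts. y \<in> star_comp u x}"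

definition near_lifts :: "'a \<Rightarrow> 'a set" where
  "near_lifts x = {u \<in> lifts. \<forall>u'\<in>lifts. u' \<noteq> u \<longrightarrow> u \<in> star_comp u' x}"

lemma lifts_nonempty: "lifts \<noteq> {}"
  using v covering by (auto simp: lifts_def covering_map_def)

lemma finite_lifts: "finite lifts"
  using finite_VL by (auto simp: lifts_def)

lemma off_star_in_star_compl: "off_star x \<Longrightarrow> u \<in> lifts \<Longrightarrow> x \<in> star_compl u"
  using phi_edge phi_vertex by (auto simp: off_star_def lifts_def star_compl_def mem_st_iff)

lemma lift_in_star_compl: "u \<in> lifts \<Longrightarrow> u' \<in> lifts \<Longrightarrow> u \<noteq> u' \<Longrightarrow> u \<in> star_compl u'"
  using phi_edge[of u' u] irrefl_G[of v] by (auto simp: lifts_def star_compl_def mem_st_iff)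

lemma stars_of_lifts_disjoint:
  assumes u: "u \<in> lifts" and u': "u' \<in> lifts" and "u \<noteq> u'" and z: "z \<in> st VL EL u"
  shows "z \<notin> st VL EL u'"
proof
  assume z': "z \<in> st VL EL u'"
  have "z \<noteq> u" "z \<noteq> u'"
    using lift_in_star_compl assms z' by (auto simp: star_compl_def)
  then have "z \<in> VL" "EL z u" "EL z u'" using z z' sym_L by (auto simp: mem_st_iff)
  moreover have "inj_on \<phi> (lk VL EL z)" using bij_betw_lk[OF \<open>z \<in> VL\<close>] by (simp add: bij_betw_def)
  ultimately show False using u u' \<open>u \<noteq> u'\<close> by (auto simp: lifts_def lk_def inj_on_def)
qed

lemma star_in_star_compl:
  "u \<in> lifts \<Longrightarrow> u' \<in> lifts \<Longrightarrow> u \<noteq> u' \<Longrightarrow> z \<in> st VL EL u \<Longrightarrow> z \<in> star_compl u'"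
  using stars_of_lifts_disjoint[of u u' z] edge_L[of u z] by (auto simp: star_compl_def lifts_def mem_st_iff)

lemma reach_lift_from_star:
  assumes "u \<in> lifts" "u' \<in> lifts" "u \<noteq> u'" "z \<in> st VL EL u"
  shows "reach_in (star_compl u') EL z u"
proof (cases "z = u")
  case False
  then have "EL z u" using assms(4) sym_L by (auto simp: mem_st_iff)
  with star_in_star_compl[OF assms] lift_in_star_compl[OF assms(1-3)] show ?thesis
    using reach_in_step[of "star_compl u'" EL z z u] by simp
qed simp


lemma star_comp_self: "x \<in> star_compl u \<Longrightarrow> x \<in> star_comp u x"
  by (simp add: star_comp_def)

lemma star_comp_subset_star_compl: "x \<in> star_compl u \<Longrightarrow> star_comp u x \<subseteq> star_compl u"
  by (auto simp: star_comp_def dest: reach_in_mem)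

lemma star_comp_eq:
  assumes "x \<in> star_compl u" "y \<in> star_comp u x"
  shows "star_comp u y = star_comp u x"
proof -
  have "reach_in (star_compl u) EL x y" "reach_in (star_compl u) EL y x"
    using assms reach_in_sym[of EL, OF sym_L] by (simp_all add: star_comp_def)
  then show ?thesis
    using reach_in_trans[of "star_compl u" EL x y] reach_in_trans[of "star_compl u" EL y x]
    by (auto simp: star_comp_def)
qed

lemma star_comp_sym: "y \<in> star_comp u x \<Longrightarrow> x \<in> star_comp u y"
  by (simp add: star_comp_def reach_in_sym[of EL, OF sym_L])

lemma star_comp_subset_graph_comp: "star_comp u x \<subseteq> graph_comp x"
  by (auto simp: star_comp_def graph_comp_def star_compl_def elim: reach_in_mono)

lemma graph_comp_sym: "y \<in> graph_comp x \<Longrightarrow> x \<in> graph_comp y"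
  by (simp add: graph_comp_def reach_in_sym[of EL, OF sym_L])

lemma lift_notin_own_star_comp: "x \<in> star_compl u \<Longrightarrow> u \<notin> star_comp u x"
  using star_comp_subset_star_compl[of x u] by (auto simp: star_compl_def st_def)

lemma star_comp_exit_edge:
  assumes "x \<in> star_compl u" and "y \<in> graph_comp x" and "y \<notin> star_comp u x"
  obtains z z' where "z \<in> st VL EL u" "z' \<in> star_comp u x" "EL z' z"
proof -
  have "reach_in VL EL x y" using assms(2) by (simp add: graph_comp_def)
  then have "y \<in> star_comp u x \<or> (\<exists>z z'. z \<in> st VL EL u \<and> z' \<in> star_comp u x \<and> EL z' z)"
  proof (induction rule: reach_in_induct)
    case refl
    then show ?case using star_comp_self[OF assms(1)] by simp
  next
    case (step c d)
    show ?case
    proof (cases "c \<in> star_comp u x \<and> d \<notin> st VL EL u")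
      case True
      then have "d \<in> star_compl u" using step(3) by (simp add: star_compl_def)
      then have "d \<in> star_comp u x"
        using True star_comp_subset_star_compl[OF assms(1)] step(4)
        by (auto simp: star_comp_def intro: reach_in_step)
      then show ?thesis by simp
    qed (use step in blast)
  qed
  with assms(3) that show ?thesis by blast
qed

lemma lift_in_star_comp_if_edge:
  assumes u: "u \<in> lifts" and u': "u' \<in> lifts" and ne: "u \<noteq> u'" and x: "x \<in> star_compl u'"
    and z: "z \<in> st VL EL u" and z': "z' \<in> star_comp u' x" and "EL z' z"
  shows "u \<in> star_comp u' x"
proof -
  have "z' \<in> star_compl u'" using star_comp_subset_star_compl[OF x] z' by blast
  then have "reach_in (star_compl u') EL x z"
    using z' star_in_star_compl[OF u u' ne z] \<open>EL z' z\<close> by (auto simp: star_comp_def intro: reach_in_step)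
  then show ?thesis
    using reach_in_trans reach_lift_from_star[OF u u' ne z] by (auto simp: star_comp_def)
qed

text \<open>\<open>C(u, x)\<close> cannot meet \<open>st(u')\<close>, which is connected to \<open>u'\<close> outside \<open>st(u)\<close>.\<close>
lemma star_comp_subset_if_lift_notin:
  assumes u: "u \<in> lifts" and u': "u' \<in> lifts" and ne: "u \<noteq> u'" and x: "x \<in> star_compl u"
    and notin: "u' \<notin> star_comp u x"
  shows "star_comp u x \<subseteq> star_comp u' x"
proof
  have off: "c \<in> star_compl u'" if "c \<in> star_comp u x" for c
  proof -
    have "c \<notin> st VL EL u'"
    proof
      assume "c \<in> st VL EL u'"
      with that have "reach_in (star_compl u) EL x u'"
        using reach_in_trans reach_lift_from_star[OF u' u ne[symmetric]] by (metis mem_Collect_eq star_comp_def)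
      with notin show False by (simp add: star_comp_def)
    qed
    then show ?thesis using that star_comp_subset_star_compl[OF x] by (auto simp: star_compl_def)
  qed
  fix y assume "y \<in> star_comp u x"
  then have "reach_in (star_compl u) EL x y" by (simp add: star_comp_def)
  then show "y \<in> star_comp u' x"
  proof (induction rule: reach_in_induct)
    case (step c d)
    then show ?case
      using off[of c] off[of d] by (auto simp: star_comp_def intro: reach_in_step)
  qed (simp add: star_comp_def)
qed


lemma star_comp_eq_if_common:
  assumes "a \<in> star_compl u" "b \<in> star_compl u" "y \<in> star_comp u a" "y \<in> star_comp u b"
  shows "star_comp u a = star_comp u b"
  using star_comp_eq[OF assms(1,3)] star_comp_eq[OF assms(2,4)] by simp

lemma lift_in_graph_comp:
  assumes "x \<in> star_compl u" "y \<in> graph_comp x" "y \<notin> star_comp u x"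
  shows "u \<in> graph_comp x"
proof -
  obtain z z' where z: "z \<in> st VL EL u" "z' \<in> star_comp u x" "EL z' z"
    using star_comp_exit_edge[OF assms] .
  have "reach_in VL EL x z"
    using z star_comp_subset_graph_comp edge_L[OF z(3)]
    by (auto simp: graph_comp_def intro: reach_in_step)
  moreover have "reach_in VL EL z u"
    using z(1) edge_L sym_L by (cases "z = u") (auto simp: mem_st_iff intro: reach_in_step[of VL EL z z u])
  ultimately show ?thesis by (auto simp: graph_comp_def intro: reach_in_trans)
qed

lemma lift_in_star_comp_if_apart:
  assumes u: "u \<in> lifts" and u': "u' \<in> lifts" and ne: "u \<noteq> u'"
    and w: "w \<in> star_compl u" "w \<in> star_compl u'"
    and x: "x \<in> graph_comp w" "x \<notin> star_comp u w" and apart: "u' \<notin> star_comp u w"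
  shows "u \<in> star_comp u' w"
proof -
  obtain z z' where z: "z \<in> st VL EL u" "z' \<in> star_comp u w" "EL z' z"
    using star_comp_exit_edge[OF w(1) x] .
  then have "z' \<in> star_comp u' w" using star_comp_subset_if_lift_notin[OF u u' ne w(1) apart] by blast
  then show ?thesis using lift_in_star_comp_if_edge[OF u u' ne w(2) z(1) _ z(3)] by blast
qed

lemma star_comp_dichotomy:
  assumes u1: "u1 \<in> lifts" and u2: "u2 \<in> lifts" and ne: "u1 \<noteq> u2"
    and x: "x \<in> star_compl u1" "x \<in> star_compl u2" and "u1 \<in> graph_comp x"
  shows "u1 \<in> star_comp u2 x \<or> u2 \<in> star_comp u1 x"
proof (rule disjCI)
  assume notin: "u2 \<notin> star_comp u1 x"
  have "u1 \<in> star_comp u2 x" if out: "u1 \<notin> star_comp u2 x"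
  proof -
    obtain z z' where z: "z \<in> st VL EL u2" "z' \<in> star_comp u2 x" "EL z' z"
      using star_comp_exit_edge[OF x(2) \<open>u1 \<in> graph_comp x\<close> out] .
    have "z' \<in> star_comp u1 x"
      using z(2) star_comp_subset_if_lift_notin[OF u2 u1 ne[symmetric] x(2) out] by blast
    then show ?thesis
      using lift_in_star_comp_if_edge[OF u2 u1 ne[symmetric] x(1) z(1) _ z(3)] notin by blast
  qed
  then show "u1 \<in> star_comp u2 x" by blast
qed


lemma near_lift_exists:
  assumes x: "off_star x" and w: "off_star w" and wx: "w \<in> graph_comp x" and "w \<notin> common_comp x"
  obtains u where "u \<in> near_lifts x" "w \<notin> star_comp u x"
proof -
  define missing where "missing = {u \<in> lifts. w \<notin> star_comp u x}"
  \<comment> \<open>a missing lift \<open>u\<close> with \<open>C(u, w)\<close> maximal is near \<open>x\<close>\<close>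
  have "missing \<noteq> {}" "finite missing"
    using assms finite_lifts by (auto simp: missing_def common_comp_def off_star_def)
  then obtain u where u: "u \<in> lifts" "w \<notin> star_comp u x"
    and maximal: "\<And>u'. u' \<in> missing \<Longrightarrow> star_comp u w \<subseteq> star_comp u' w \<Longrightarrow> star_comp u w = star_comp u' w"
    using finite_has_maximal[of "(\<lambda>u. star_comp u w) ` missing"] by (auto simp: missing_def)
  have xs: "x \<in> star_compl u" and ws: "w \<in> star_compl u"
    using off_star_in_star_compl x w u by auto
  have "u \<in> star_comp u' x" if u': "u' \<in> lifts" "u' \<noteq> u" for u'
  proof (rule ccontr)
    assume out: "u \<notin> star_comp u' x"
    have xs': "x \<in> star_compl u'" and ws': "w \<in> star_compl u'"
      using off_star_in_star_compl x w u' by auto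
    have "star_comp u' x \<subseteq> star_comp u x"
      by (rule star_comp_subset_if_lift_notin[OF u'(1) u(1) u'(2) xs' out])
    then have "u' \<in> missing" using u u' by (auto simp: missing_def)
    have "u \<in> graph_comp x" using lift_in_graph_comp[OF xs wx u(2)] .
    then have "u' \<in> star_comp u x"
      using star_comp_dichotomy[OF u(1) u'(1) u'(2)[symmetric] xs xs'] out by blast
    then have apart: "u' \<notin> star_comp u w"
      using star_comp_eq_if_common[OF xs ws] star_comp_self[OF ws] u(2) by blast
    have "x \<notin> star_comp u w" using star_comp_sym u(2) by blast
    then have "u \<in> star_comp u' w"
      using lift_in_star_comp_if_apart[OF u(1) u'(1) u'(2)[symmetric] ws ws' graph_comp_sym[OF wx] _ apart]
      by blast
    moreover have "star_comp u w \<subseteq> star_comp u' w"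
      by (rule star_comp_subset_if_lift_notin[OF u(1) u'(1) u'(2)[symmetric] ws apart])
    ultimately show False
      using maximal[OF \<open>u' \<in> missing\<close>] lift_notin_own_star_comp[OF ws] by blast
  qed
  then have "u \<in> near_lifts x" using u by (auto simp: near_lifts_def)
  then show ?thesis using u(2) by (rule that)
qed

lemma near_lift_unique:
  assumes x: "off_star x" and w: "off_star w" and wx: "w \<in> graph_comp x"
    and u1: "u1 \<in> near_lifts x" "w \<notin> star_comp u1 x"
    and u2: "u2 \<in> near_lifts x" "w \<notin> star_comp u2 x"
  shows "u1 = u2"
proof (rule ccontr)
  assume ne: "u1 \<noteq> u2"
  have L: "u1 \<in> lifts" "u2 \<in> lifts" and near: "u1 \<in> star_comp u2 x" "u2 \<in> star_comp u1 x"
    using u1 u2 ne by (auto simp: near_lifts_def)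
  have xs: "x \<in> star_compl u1" "x \<in> star_compl u2" and ws: "w \<in> star_compl u1" "w \<in> star_compl u2"
    using off_star_in_star_compl x w L by auto
  have apart: "u2 \<notin> star_comp u1 w"
    using star_comp_eq_if_common[OF xs(1) ws(1) near(2)] star_comp_self[OF ws(1)] u1(2) by blast
  have "x \<notin> star_comp u1 w" using star_comp_sym u1(2) by blast
  then have "u1 \<in> star_comp u2 w"
    using lift_in_star_comp_if_apart[OF L ne ws graph_comp_sym[OF wx] _ apart] by blast
  then show False
    using star_comp_eq_if_common[OF xs(2) ws(2) near(1)] star_comp_self[OF ws(2)] u2(2) by blast
qed


lemma pconj_domain_star_comp:
  assumes u: "u \<in> lifts" and x: "x \<in> star_compl u"
  shows "pconj_domain VL EL u (star_comp u x)"
  unfolding pconj_domain_def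
proof (intro conjI ballI impI)
  show "u \<in> VL" using u by (simp add: lifts_def)
  show "u \<notin> star_comp u x" by (rule lift_notin_own_star_comp[OF x])
  fix a b assume a: "a \<in> star_comp u x" and b: "b \<in> VL" "EL a b" "b \<notin> star_comp u x"
  show "b \<in> st VL EL u"
  proof (rule ccontr)
    assume "b \<notin> st VL EL u"
    then have "b \<in> star_comp u x"
      using a b star_comp_subset_star_compl[OF x]
      by (auto simp: star_comp_def star_compl_def intro: reach_in_step)
    with b(3) show False ..
  qed
qed

lemma pconj_domain_graph_comp_minus_star:
  assumes u: "u \<in> VL"
  shows "pconj_domain VL EL u (graph_comp x - st VL EL u)"
  unfolding pconj_domain_def
proof (intro conjI ballI impI)
  fix a b assume "a \<in> graph_comp x - st VL EL u" "b \<in> VL" "EL a b" "b \<notin> graph_comp x - st VL EL u"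
  then show "b \<in> st VL EL u"
    using edge_L by (auto simp: graph_comp_def intro: reach_in_step)
qed (use u in \<open>auto simp: st_def\<close>)

lemma card_near_lifts_missing:
  assumes x: "off_star x" and w: "off_star w" and "w \<in> graph_comp x" "w \<notin> common_comp x"
  shows "card {u \<in> near_lifts x. w \<notin> star_comp u x} = 1"
proof -
  obtain u where "u \<in> near_lifts x" "w \<notin> star_comp u x" using near_lift_exists[OF assms] .
  then have "{u \<in> near_lifts x. w \<notin> star_comp u x} = {u}"
    using near_lift_unique[OF x w \<open>w \<in> graph_comp x\<close>] by blast
  then show ?thesis by simp
qed

lemma finite_near_lifts: "finite (near_lifts x)"
  using finite_lifts by (rule finite_subset[rotated]) (auto simp: near_lifts_def)

lemma card_near_lifts_containing:
  assumes x: "off_star x" and w: "off_star w"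
  shows "int (card {u \<in> near_lifts x. w \<in> star_comp u x})
      + (if w \<in> graph_comp x then 1 - int (card (near_lifts x)) else 0)
    = (if w \<in> common_comp x then 1 else 0)"
proof (cases "w \<in> graph_comp x")
  case True
  let ?A = "near_lifts x"
  have split: "card ?A = card {u \<in> ?A. w \<in> star_comp u x} + card {u \<in> ?A. w \<notin> star_comp u x}"
    using finite_near_lifts by (subst card_Un_disjoint[symmetric]) (auto intro: arg_cong[where f = card])
  show ?thesis
  proof (cases "w \<in> common_comp x")
    case True
    then have "{u \<in> ?A. w \<notin> star_comp u x} = {}" by (auto simp: common_comp_def near_lifts_def)
    with split \<open>w \<in> graph_comp x\<close> True show ?thesis by simp
  next
    case False
    with split card_near_lifts_missing[OF x w \<open>w \<in> graph_comp x\<close>] True show ?thesis by simp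
  qed
next
  case False
  obtain u0 where "u0 \<in> lifts" using lifts_nonempty by blast
  with False have empty: "{u \<in> near_lifts x. w \<in> star_comp u x} = {}" and "w \<notin> common_comp x"
    using star_comp_subset_graph_comp by (auto simp: common_comp_def)
  then show ?thesis by (simp only: empty card.empty) (simp add: False)
qed

section \<open>Construction of the lift\<close>

text \<open>Vertices over \<open>st(v)\<close> are left unconstrained, as their images commute with \<open>v\<close>.\<close>
definition realizable :: "'a set \<Rightarrow> bool" where
  "realizable S \<longleftrightarrow> (\<exists>L. (\<forall>(u, C, e) \<in> set L. pconj_domain VL EL u C \<and> \<phi> u = v)
     \<and> (\<forall>w. off_star w \<longrightarrow> conj_exponent L w = (if w \<in> S then 1 else 0)))"

lemma realizable_common_comp:
  assumes x: "off_star x"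
  shows "realizable (common_comp x)"
proof -
  obtain us where us: "distinct us" "set us = near_lifts x"
    using finite_distinct_list[OF finite_near_lifts] by blast
  obtain u0 where u0: "u0 \<in> lifts" using lifts_nonempty by blast
  define c where "c = 1 - int (card (near_lifts x))"
  define L where "L = map (\<lambda>u. (u, star_comp u x, True)) us
    @ replicate (nat \<bar>c\<bar>) (u0, graph_comp x - st VL EL u0, 0 \<le> c)"
  have "\<forall>(u, C, e) \<in> set L. pconj_domain VL EL u C \<and> \<phi> u = v"
    using us u0 off_star_in_star_compl[OF x] pconj_domain_star_comp pconj_domain_graph_comp_minus_star
    by (auto simp: L_def near_lifts_def lifts_def)
  moreover have "conj_exponent L w = (if w \<in> common_comp x then 1 else 0)" if w: "off_star w" for w
  proof -
    have "w \<notin> st VL EL u0" using off_star_in_star_compl[OF w u0] by (simp add: star_compl_def)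
    then have "conj_exponent L w = int (card {u \<in> near_lifts x. w \<in> star_comp u x})
        + (if w \<in> graph_comp x then c else 0)"
      using us by (simp add: L_def conj_exponent_append conj_exponent_map conj_exponent_replicate
          distinct_length_filter Collect_conj_eq Int_commute)
    then show ?thesis using card_near_lifts_containing[OF x w] unfolding c_def by (rule trans)
  qed
  ultimately show ?thesis by (auto simp: realizable_def)
qed


lemma realizable_Union:
  assumes "finite F" "\<And>S. S \<in> F \<Longrightarrow> realizable S" "pairwise disjnt F"
  shows "realizable (\<Union>F)"
  using assms
proof (induction F rule: finite_induct)
  case empty
  show ?case by (auto simp: realizable_def intro: exI[of _ "[]"])
next
  case (insert S F)
  have "realizable S" using insert.prems(1) by blast
  then obtain L1 where L1: "\<forall>(u, C, e) \<in> set L1. pconj_domain VL EL u C \<and> \<phi> u = v"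
    "\<And>w. off_star w \<Longrightarrow> conj_exponent L1 w = (if w \<in> S then 1 else 0)"
    by (auto simp: realizable_def)
  have "pairwise disjnt F" using insert.prems(2) by (rule pairwise_subset) auto
  have "realizable (\<Union>F)" by (rule insert.IH) (use insert.prems(1) \<open>pairwise disjnt F\<close> in auto)
  then obtain L2 where L2: "\<forall>(u, C, e) \<in> set L2. pconj_domain VL EL u C \<and> \<phi> u = v"
    "\<And>w. off_star w \<Longrightarrow> conj_exponent L2 w = (if w \<in> \<Union>F then 1 else 0)"
    by (auto simp: realizable_def)
  have "disjnt S T" if "T \<in> F" for T
    using insert.prems(2) insert.hyps(2) that unfolding pairwise_def by (metis insertCI)
  then have "conj_exponent (L1 @ L2) w = (if w \<in> \<Union>(insert S F) then 1 else 0)" if "off_star w" for w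
    using L1(2)[OF that] L2(2)[OF that] by (auto simp: conj_exponent_append disjnt_def)
  with L1(1) L2(1) show ?case unfolding realizable_def by (intro exI[of _ "L1 @ L2"]) auto
qed

lemma common_comp_self: "off_star x \<Longrightarrow> x \<in> common_comp x"
  using star_comp_self off_star_in_star_compl by (auto simp: common_comp_def off_star_def)

lemma common_comp_eq:
  assumes x: "off_star x" and y: "off_star y" and "z \<in> common_comp x" "z \<in> common_comp y"
  shows "common_comp x = common_comp y"
proof -
  have "star_comp u x = star_comp u y" if "u \<in> lifts" for u
    using star_comp_eq_if_common[OF off_star_in_star_compl[OF x that] off_star_in_star_compl[OF y that]]
      assms(3,4) that by (auto simp: common_comp_def)
  then show ?thesis by (auto simp: common_comp_def)
qed

lemma off_star_if_common_comp:
  assumes x: "off_star x" and z: "z \<in> common_comp x"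
  shows "off_star z"
proof -
  have zV: "z \<in> VL" and zK: "\<And>u. u \<in> lifts \<Longrightarrow> z \<in> star_comp u x"
    using z by (auto simp: common_comp_def)
  have "z \<in> star_compl u" if "u \<in> lifts" for u
    using zK[OF that] star_comp_subset_star_compl[OF off_star_in_star_compl[OF x that]] by blast
  moreover have "\<phi> z \<noteq> v" using calculation[of z] zV by (auto simp: lifts_def star_compl_def st_def)
  moreover have "\<not> EG v (\<phi> z)"
  proof
    assume "EG v (\<phi> z)"
    then obtain u where "u \<in> VL" "EL z u" "\<phi> u = v" using lift_neighbour[OF zV] sym_G by blast
    then show False using calculation(1)[of u] sym_L by (auto simp: lifts_def star_compl_def mem_st_iff)
  qed
  ultimately show ?thesis using zV by (auto simp: off_star_def mem_st_iff)
qed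

lemma pconj_domain_image_common_comp:
  assumes x: "off_star x"
  shows "pconj_domain VG EG v (\<phi> ` common_comp x)"
  unfolding pconj_domain_def
proof (intro conjI ballI impI)
  show "v \<in> VG" by (rule v)
  show "v \<notin> \<phi> ` common_comp x"
    using off_star_if_common_comp[OF x] by (auto simp: off_star_def st_def)
  fix a b assume a: "a \<in> \<phi> ` common_comp x" and b: "b \<in> VG" "EG a b" "b \<notin> \<phi> ` common_comp x"
  obtain z where z: "z \<in> common_comp x" "a = \<phi> z" using a by blast
  obtain y where y: "y \<in> VL" "EL z y" "\<phi> y = b"
    using lift_neighbour[of z b] z b(2) by (auto simp: common_comp_def)
  show "b \<in> st VG EG v"
  proof (rule ccontr)
    assume "b \<notin> st VG EG v"
    then have "off_star y" using y by (simp add: off_star_def)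
    have "y \<in> star_comp u x" if u: "u \<in> lifts" for u
    proof -
      have "z \<in> star_comp u x" using z u by (simp add: common_comp_def)
      moreover have "z \<in> star_compl u" using off_star_in_star_compl[OF off_star_if_common_comp[OF x z(1)] u] .
      ultimately show ?thesis
        using off_star_in_star_compl[OF \<open>off_star y\<close> u] y(2) by (auto simp: star_comp_def intro: reach_in_step)
    qed
    then have "y \<in> common_comp x" using y(1) by (simp add: common_comp_def)
    with y(3) b(3) show False by blast
  qed
qed


lemma deck_star_compl:
  assumes \<mu>: "\<mu> \<in> deck VL EL \<phi>" and u: "u \<in> VL" and c: "c \<in> star_compl u"
  shows "\<mu> c \<in> star_compl (\<mu> u)"
proof -
  have bij: "bij_betw \<mu> VL VL" and edges: "\<And>x y. x \<in> VL \<Longrightarrow> y \<in> VL \<Longrightarrow> EL x y \<longleftrightarrow> EL (\<mu> x) (\<mu> y)"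
    using \<mu> by (auto simp: deck_def graph_aut_def)
  have "c \<in> VL" "c \<noteq> u" "\<not> EL u c" using c by (auto simp: star_compl_def mem_st_iff)
  then show ?thesis
    using bij u edges[OF u] by (auto simp: star_compl_def mem_st_iff bij_betw_def inj_on_def)
qed

lemma deck_star_comp:
  assumes \<mu>: "\<mu> \<in> deck VL EL \<phi>" and u: "u \<in> VL" and y: "y \<in> star_comp u x"
  shows "\<mu> y \<in> star_comp (\<mu> u) (\<mu> x)"
proof -
  have edges: "\<And>x y. x \<in> VL \<Longrightarrow> y \<in> VL \<Longrightarrow> EL x y \<longleftrightarrow> EL (\<mu> x) (\<mu> y)"
    using \<mu> by (auto simp: deck_def graph_aut_def)
  have "reach_in (star_compl u) EL x y" using y by (simp add: star_comp_def)
  then have "reach_in (star_compl (\<mu> u)) EL (\<mu> x) (\<mu> y)"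
  proof (induction rule: reach_in_induct)
    case (step c d)
    then have "EL (\<mu> c) (\<mu> d)" using edges by (auto simp: star_compl_def)
    with step show ?case using deck_star_compl[OF \<mu> u] by (blast intro: reach_in_step)
  qed simp
  then show ?thesis by (simp add: star_comp_def)
qed

lemma deck_common_comp:
  assumes \<mu>: "\<mu> \<in> deck VL EL \<phi>" and z: "z \<in> common_comp x"
  shows "\<mu> z \<in> common_comp (\<mu> x)"
proof -
  have bij: "bij_betw \<mu> VL VL" and \<phi>\<mu>: "\<And>a. a \<in> VL \<Longrightarrow> \<phi> (\<mu> a) = \<phi> a"
    using \<mu> by (auto simp: deck_def graph_aut_def)
  have "\<mu> z \<in> star_comp u' (\<mu> x)" if u': "u' \<in> lifts" for u'
  proof -
    have "u' \<in> \<mu> ` VL" using bij u' by (simp add: bij_betw_def lifts_def)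
    then obtain u where "u \<in> VL" "\<mu> u = u'" by blast
    moreover from this have "u \<in> lifts" using u' \<phi>\<mu> by (auto simp: lifts_def)
    ultimately show ?thesis using deck_star_comp[OF \<mu>] z by (auto simp: common_comp_def)
  qed
  moreover have "\<mu> z \<in> VL" using bij z by (auto simp: bij_betw_def common_comp_def)
  ultimately show ?thesis by (simp add: common_comp_def)
qed

text \<open>This is where regularity is used: a deck transformation moving \<open>x\<close> into \<open>common_comp b\<close>
  carries \<open>common_comp x\<close> into \<open>common_comp b\<close>.\<close>
lemma common_comp_subset_preimage:
  assumes b: "off_star b" and x: "x \<in> VL" "\<phi> x \<in> \<phi> ` common_comp b"
  shows "common_comp x \<subseteq> {y \<in> VL. \<phi> y \<in> \<phi> ` common_comp b}"
proof
  fix z assume z: "z \<in> common_comp x"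
  obtain y where y: "y \<in> common_comp b" "\<phi> x = \<phi> y" using x(2) by auto
  have yV: "y \<in> VL" using y by (simp add: common_comp_def)
  obtain \<mu> where \<mu>: "\<mu> \<in> deck VL EL \<phi>" "\<mu> x = y"
    using regular x(1) yV y(2) by (auto simp: regular_covering_def)
  have "off_star y" by (rule off_star_if_common_comp[OF b y(1)])
  then have "common_comp y = common_comp b"
    using common_comp_eq[OF _ b common_comp_self y(1)] by blast
  then have "\<mu> z \<in> common_comp b" using deck_common_comp[OF \<mu>(1) z] \<mu>(2) by simp
  moreover have "\<phi> (\<mu> z) = \<phi> z" "z \<in> VL" using \<mu>(1) z by (auto simp: deck_def common_comp_def)
  ultimately show "z \<in> {y \<in> VL. \<phi> y \<in> \<phi> ` common_comp b}" by (metis (mono_tags) image_eqI mem_Collect_eq)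
qed

lemma realizable_preimage_common_comp:
  assumes b: "off_star b"
  shows "realizable {x \<in> VL. \<phi> x \<in> \<phi> ` common_comp b}" (is "realizable ?P")
proof -
  have off: "off_star x" if "x \<in> ?P" for x
    using that off_star_if_common_comp[OF b] by (auto simp: off_star_def)
  have "?P = \<Union>(common_comp ` ?P)"
    using common_comp_subset_preimage[OF b] common_comp_self off by blast
  moreover have "realizable (\<Union>(common_comp ` ?P))"
  proof (rule realizable_Union)
    show "finite (common_comp ` ?P)" using finite_VL by simp
    show "realizable X" if "X \<in> common_comp ` ?P" for X
      using that off realizable_common_comp by blast
    show "pairwise disjnt (common_comp ` ?P)"
      using common_comp_eq off by (fastforce simp: pairwise_def disjnt_def)
  qed
  ultimately show ?thesis by simp
qed

lemma liftable_pconj_image_common_comp: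
  assumes b: "off_star b"
  shows "liftable VL EL VG EG \<phi> (pconj VG EG v (\<phi> ` common_comp b))"
proof -
  obtain L where L: "\<forall>(u, C, e) \<in> set L. pconj_domain VL EL u C \<and> \<phi> u = v"
    and exponent: "\<And>w. off_star w \<Longrightarrow> conj_exponent L w = (if w \<in> VL \<and> \<phi> w \<in> \<phi> ` common_comp b then 1 else 0)"
    using realizable_preimage_common_comp[OF b] by (auto simp: realizable_def)
  show ?thesis
  proof (rule liftable_pconj_if_conj_exponents[OF sym_L sym_G graph_hom v
        pconj_domain_image_common_comp[OF b] L])
    fix w assume "w \<in> VL" "\<phi> w \<in> \<phi> ` common_comp b"
    moreover from this have "off_star w"
      using off_star_if_common_comp[OF b] by (auto simp: off_star_def)
    ultimately show "conj_exponent L w = 1" using exponent by simp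
  next
    fix w assume "w \<in> VL" "\<phi> w \<notin> \<phi> ` common_comp b" "\<phi> w \<notin> st VG EG v"
    then show "conj_exponent L w = 0" using exponent by (simp add: off_star_def)
  qed
qed


lemma bar_set_eq_image_common_comp:
  assumes B: "component (VG - st VG EG v) EG B" and Bt: "component {u \<in> VL. \<phi> u \<in> B} EL Bt"
  obtains b where "off_star b" "bar_set VL EL \<phi> v Bt = \<phi> ` common_comp b"
proof -
  define BL where "BL = {u \<in> VL. \<phi> u \<in> B}"
  obtain b where b: "b \<in> BL" "Bt = {y. reach_in BL EL b y}"
    using Bt by (auto simp: component_def BL_def)
  have "B \<subseteq> VG - st VG EG v" using B reach_in_mem by (fastforce simp: component_def)
  then have BL_off: "off_star x" if "x \<in> BL" for x using that by (auto simp: off_star_def BL_def)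
  have comp: "comp_containing VL EL u Bt = star_comp u b" if u: "u \<in> lifts" for u
    unfolding comp_containing_def
  proof (rule the_equality)
    have "BL \<subseteq> star_compl u" using BL_off off_star_in_star_compl u by blast
    then have "Bt \<subseteq> star_comp u b" using b(2) by (auto simp: star_comp_def elim: reach_in_mono)
    moreover have "b \<in> star_compl u" using off_star_in_star_compl[OF BL_off[OF b(1)] u] .
    ultimately show "component (VL - st VL EL u) EL (star_comp u b) \<and> Bt \<subseteq> star_comp u b"
      by (auto simp: component_def star_comp_def star_compl_def)
  next
    fix K assume K: "component (VL - st VL EL u) EL K \<and> Bt \<subseteq> K"
    then obtain z where z: "z \<in> star_compl u" "K = star_comp u z"
      by (auto simp: component_def star_comp_def star_compl_def)
    have "b \<in> Bt" using b by simp
    then show "K = star_comp u b" using K z star_comp_eq[OF z(1)] by auto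
  qed
  obtain u0 where u0: "u0 \<in> lifts" using lifts_nonempty by blast
  have "(\<Inter>u\<in>lifts. comp_containing VL EL u Bt) = common_comp b"
    using comp star_comp_subset_star_compl[OF off_star_in_star_compl[OF BL_off[OF b(1)] u0]] u0
    by (auto simp: common_comp_def star_compl_def)
  then have "bar_set VL EL \<phi> v Bt = \<phi> ` common_comp b"
    by (simp add: bar_set_def lifts_def)
  with BL_off[OF b(1)] show ?thesis by (rule that)
qed

end

theorem proposition3p8:
  fixes VL :: "'a set" and EL :: "'a \<Rightarrow> 'a \<Rightarrow> bool"
    and VG :: "'b set" and EG :: "'b \<Rightarrow> 'b \<Rightarrow> bool"
    and \<phi> :: "'a \<Rightarrow> 'b" and v :: 'b and B :: "'b set" and Bt :: "'a set"
  assumes "simple_graph VL EL" and "simple_graph VG EG"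
    and "regular_covering VL EL VG EG \<phi>"
    and "v \<in> VG"
    and "component (VG - st VG EG v) EG B"
    and "component {u \<in> VL. \<phi> u \<in> B} EL Bt"
  shows "liftable VL EL VG EG \<phi> (pconj VG EG v (bar_set VL EL \<phi> v Bt))"
proof -
  interpret covering_fiber VL EL VG EG \<phi> v
    using assms(1-4) by unfold_locales
  obtain b where "off_star b" "bar_set VL EL \<phi> v Bt = \<phi> ` common_comp b"
    using bar_set_eq_image_common_comp[OF assms(5,6)] .
  then show ?thesis using liftable_pconj_image_common_comp by simp
qed

end
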